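(* Let $M=(E,\mathcal{I})$ be a matroid, $m,\Delta$ positive integers and $W:E\to\{-\Delta,\dots,\Delta\}^m$ weight vectors. Let $A,B\in\mathcal{I}$ be disjoint with $|A|=|B|=k$, and let $\mu=\|W(A)-W(B)\|_1$. Then there are unicolor sets $A_0,A_1,\dots,A_\ell\subseteq A$ and $B_0,B_1,\dots,B_\ell\subseteq B$ such that (i) $(A\setminus A_i)\cup B_i\in\mathcal{I}$ for all $i$, (ii) $|A_i|=|B_i|\ge k/(2m\Delta)^{10m}-\mu$ for all $i$, (iii) $-\delta_0\in\mathrm{cone}(\{\delta_1,\dots,\delta_\ell\})$, where $\delta_i\in\mathbb{Z}^m$ satisfies $\delta_i=W(a)-W(b)$ for all $a\in A_i$, $b\in B_i$.
   Context: $W(S)=\sum_{e\in S}W(e)$. A set $S\subseteq E$ is unicolor if $W(a)=W(b)$ for all $a,b\in S$. $\mathrm{cone}(Y)=\{\sum_{y\in Y}\lambda_y y:\lambda_y\ge 0\}$. *)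

theory Defs
  imports Complex_Main
begin

definition matroid :: "'a set \<Rightarrow> ('a set \<Rightarrow> bool) \<Rightarrow> bool" where
  "matroid E indep \<longleftrightarrow>
     finite E \<and>
     (\<forall>X. indep X \<longrightarrow> X \<subseteq> E) \<and>
     indep {} \<and>
     (\<forall>X Y. indep X \<and> Y \<subseteq> X \<longrightarrow> indep Y) \<and>
     (\<forall>X Y. indep X \<and> indep Y \<and> card X < card Y \<longrightarrow>
         (\<exists>y \<in> Y - X. indep (insert y X)))"

text \<open>Vectors in Z^m are represented as functions nat => int, only coordinates j < m matter.\<close>
definition wsum :: "('a \<Rightarrow> nat \<Rightarrow> int) \<Rightarrow> 'a set \<Rightarrow> nat \<Rightarrow> int" where
  "wsum W S = (\<lambda>j. \<Sum>e\<in>S. W e j)"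

definition l1norm :: "nat \<Rightarrow> (nat \<Rightarrow> int) \<Rightarrow> int" where
  "l1norm m v = (\<Sum>j<m. \<bar>v j\<bar>)"

definition unicolor :: "nat \<Rightarrow> ('a \<Rightarrow> nat \<Rightarrow> int) \<Rightarrow> 'a set \<Rightarrow> bool" where
  "unicolor m W S \<longleftrightarrow> (\<forall>a\<in>S. \<forall>b\<in>S. \<forall>j<m. W a j = W b j)"

definition in_cone :: "nat \<Rightarrow> (nat \<Rightarrow> int) \<Rightarrow> nat set \<Rightarrow> (nat \<Rightarrow> nat \<Rightarrow> int) \<Rightarrow> bool" where
  "in_cone m v I y \<longleftrightarrow>
     (\<exists>c::nat \<Rightarrow> real. (\<forall>i\<in>I. c i \<ge> 0) \<and>
        (\<forall>j<m. real_of_int (v j) = (\<Sum>i\<in>I. c i * real_of_int (y i j))))"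

end

theory Submission
  imports Defs "Jordan_Normal_Form.Determinant"
begin

text \<open>Let \<open>G\<close> be the set of differences \<open>W a - W b\<close> with \<open>a \<in> A'\<close>, \<open>b \<in> B'\<close>, where \<open>(A', B')\<close>
  ranges over the unicolor exchanges satisfying (i) and (ii). By Gordan's alternative, either a
  nonnegative combination of \<open>G\<close> with a positive coefficient vanishes, which is exactly the cone
  condition (iii), or some \<open>y\<close> has \<open>y \<bullet> g > 0\<close> on \<open>G\<close>. In the second case a vertex of
  \<open>{y. \<forall>g\<in>G. y \<bullet> g \<ge> 1}\<close> and Cramer's rule give an integral \<open>Y\<close> with \<open>Y \<bullet> g \<ge> 1\<close> on \<open>G\<close> and
  entries bounded in terms of \<open>m\<close> and \<open>\<Delta>\<close> only. Then the potential \<open>f e = Y \<bullet> W e\<close> drops along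
  every such exchange. Cutting \<open>A\<close> and \<open>B\<close> into the level sets of \<open>f\<close> and comparing consecutive
  levels by matroid augmentation, with two pigeonhole steps over the \<open>(2\<Delta> + 1)\<^sup>m\<close> colours,
  shows that \<open>k\<close> is less than a constant multiple of the size bound in (ii) plus a multiple of
  \<open>\<mu>\<close>, which is impossible for the chosen bound.\<close>

section \<open>Gordan's alternative\<close>

definition dot :: "nat \<Rightarrow> (nat \<Rightarrow> real) \<Rightarrow> (nat \<Rightarrow> int) \<Rightarrow> real" where
  "dot m y g = (\<Sum>j<m. y j * of_int (g j))"

definition pos_dependent :: "nat \<Rightarrow> (nat \<Rightarrow> int) set \<Rightarrow> bool" where
  "pos_dependent m G \<longleftrightarrow> (\<exists>c::(nat \<Rightarrow> int) \<Rightarrow> real. (\<forall>g\<in>G. 0 \<le> c g) \<and> (\<exists>g\<in>G. 0 < c g) \<and>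
     (\<forall>j<m. (\<Sum>g\<in>G. c g * of_int (g j)) = 0))"

definition pos_combination :: "(nat \<Rightarrow> int) set \<Rightarrow> (nat \<Rightarrow> int) \<Rightarrow> bool" where
  "pos_combination G v \<longleftrightarrow> (\<exists>c::(nat \<Rightarrow> int) \<Rightarrow> real. (\<forall>g\<in>G. 0 \<le> c g) \<and> (\<exists>g\<in>G. 0 < c g) \<and>
     (\<forall>j. of_int (v j) = (\<Sum>g\<in>G. c g * of_int (g j))))"

definition eliminate :: "nat \<Rightarrow> (nat \<Rightarrow> int) \<Rightarrow> (nat \<Rightarrow> int) \<Rightarrow> nat \<Rightarrow> int" where
  "eliminate j g h = (\<lambda>i. - h j * g i + g j * h i)"

lemma dot_Suc_upd: "dot (Suc m) (y(m := c)) g = dot m y g + c * of_int (g m)"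
  by (simp add: dot_def)

lemma dot_eliminate:
  "dot m y (eliminate j g h) = - of_int (h j) * dot m y g + of_int (g j) * dot m y h"
  by (simp add: dot_def eliminate_def algebra_simps sum_subtractf sum_negf sum_distrib_left)

lemma exists_strictly_between_finite:
  fixes L U :: "real set"
  assumes "finite L" "finite U" and less: "\<And>l u. l \<in> L \<Longrightarrow> u \<in> U \<Longrightarrow> l < u"
  shows "\<exists>c. (\<forall>l\<in>L. l < c) \<and> (\<forall>u\<in>U. c < u)"
proof (cases "L = {}"; cases "U = {}")
  assume "L \<noteq> {}" "U \<noteq> {}"
  then have "Max L < Min U" using assms by simp
  then show ?thesis using assms
    by (intro exI[of _ "(Max L + Min U) / 2"]) (auto dest: Max_ge Min_le)
next
  assume "L \<noteq> {}" "U = {}"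
  then show ?thesis using assms by (intro exI[of _ "Max L + 1"]) (auto dest: Max_ge)
next
  assume "L = {}" "U \<noteq> {}"
  then show ?thesis using assms by (intro exI[of _ "Min U - 1"]) (auto dest: Min_le)
qed auto

text \<open>The induction step of Fourier--Motzkin elimination for the strict system
  \<open>0 < dot (Suc m) y g\<close>: the last coordinate of \<open>y\<close> has to lie strictly between the lower bounds
  coming from \<open>g m > 0\<close> and the upper bounds coming from \<open>g m < 0\<close>, and the eliminated
  inequalities say exactly that every lower bound is below every upper bound.\<close>
lemma separator_extend:
  assumes "finite G"
    and zero: "\<And>g. g \<in> G \<Longrightarrow> g m = 0 \<Longrightarrow> 0 < dot m y g"
    and pair: "\<And>g h. g \<in> G \<Longrightarrow> h \<in> G \<Longrightarrow> 0 < g m \<Longrightarrow> h m < 0 \<Longrightarrow> 0 < dot m y (eliminate m g h)"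
  shows "\<exists>c. \<forall>g\<in>G. 0 < dot (Suc m) (y(m := c)) g"
proof -
  define L where "L = (\<lambda>g. - dot m y g / of_int (g m)) ` {g\<in>G. 0 < g m}"
  define U where "U = (\<lambda>h. dot m y h / of_int (- h m)) ` {h\<in>G. h m < 0}"
  have "l < u" if lu: "l \<in> L" "u \<in> U" for l u
  proof -
    obtain g h where g: "g \<in> G" "0 < g m" "l = - dot m y g / of_int (g m)"
      and h: "h \<in> G" "h m < 0" "u = dot m y h / of_int (- h m)"
      using lu unfolding L_def U_def by blast
    have gm: "0 < (of_int (g m) :: real)" and hm: "0 < (of_int (- h m) :: real)"
      using g h by simp_all
    have "dot m y g = - l * of_int (g m)" "dot m y h = u * of_int (- h m)"
      using g(3) h(3) gm hm by simp_all
    then have "of_int (g m) * of_int (- h m) * (u - l) = - of_int (h m) * dot m y g + of_int (g m) * dot m y h"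
      by (simp add: algebra_simps)
    also have "\<dots> > 0"
      using pair[OF g(1) h(1) g(2) h(2)] by (simp add: dot_eliminate)
    finally have "0 < u - l" using zero_less_mult_pos mult_pos_pos[OF gm hm] by blast
    then show ?thesis by simp
  qed
  then obtain c where lc: "\<forall>l\<in>L. l < c" and cu: "\<forall>u\<in>U. c < u"
    using exists_strictly_between_finite[of L U] \<open>finite G\<close> by (auto simp: L_def U_def)
  have "0 < dot (Suc m) (y(m := c)) g" if "g \<in> G" for g
  proof (cases "g m" "0::int" rule: linorder_cases)
    case less
    then have "c < dot m y g / of_int (- g m)" using cu that by (auto simp: U_def)
    then show ?thesis using less by (simp add: dot_Suc_upd field_simps)
  next
    case equal
    then show ?thesis using zero that by (simp add: dot_Suc_upd)
  next
    case greater
    then have "- dot m y g / of_int (g m) < c" using lc that by (auto simp: L_def)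
    then show ?thesis using greater by (simp add: dot_Suc_upd field_simps)
  qed
  then show ?thesis by blast
qed

lemma pos_dependent_Suc:
  assumes "pos_dependent m G" and "\<And>g. g \<in> G \<Longrightarrow> g m = 0"
  shows "pos_dependent (Suc m) G"
proof -
  obtain c :: "(nat \<Rightarrow> int) \<Rightarrow> real" where "\<forall>g\<in>G. 0 \<le> c g" "\<exists>g\<in>G. 0 < c g"
    "\<forall>j<m. (\<Sum>g\<in>G. c g * of_int (g j)) = 0"
    using assms(1) unfolding pos_dependent_def by blast
  moreover have "(\<Sum>g\<in>G. c g * of_int (g m)) = 0" by (rule sum.neutral) (simp add: assms(2))
  ultimately show ?thesis unfolding pos_dependent_def less_Suc_eq by blast
qed

lemma pos_dependent_transfer:
  assumes "finite G" "finite G'" and dep: "pos_dependent n G'"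
    and comb: "\<And>g'. g' \<in> G' \<Longrightarrow> pos_combination G g'"
  shows "pos_dependent n G"
proof -
  obtain c :: "(nat \<Rightarrow> int) \<Rightarrow> real" where c_nonneg: "\<forall>g'\<in>G'. 0 \<le> c g'"
    and c_pos: "\<exists>g'\<in>G'. 0 < c g'" and c_sum: "\<forall>j<n. (\<Sum>g'\<in>G'. c g' * of_int (g' j)) = 0"
    using dep unfolding pos_dependent_def by blast
  have "\<forall>g'\<in>G'. \<exists>\<kappa>::(nat \<Rightarrow> int) \<Rightarrow> real. (\<forall>g\<in>G. 0 \<le> \<kappa> g) \<and> (\<exists>g\<in>G. 0 < \<kappa> g) \<and>
      (\<forall>j. of_int (g' j) = (\<Sum>g\<in>G. \<kappa> g * of_int (g j)))"
    using comb unfolding pos_combination_def by blast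
  then obtain \<kappa> :: "(nat \<Rightarrow> int) \<Rightarrow> (nat \<Rightarrow> int) \<Rightarrow> real"
    where \<kappa>: "\<forall>g'\<in>G'. (\<forall>g\<in>G. 0 \<le> \<kappa> g' g) \<and> (\<exists>g\<in>G. 0 < \<kappa> g' g) \<and>
      (\<forall>j. of_int (g' j) = (\<Sum>g\<in>G. \<kappa> g' g * of_int (g j)))"
    by (rule bchoice[elim_format]) blast
  have \<kappa>_nonneg: "0 \<le> \<kappa> g' g" if "g' \<in> G'" "g \<in> G" for g' g using \<kappa> that by blast
  have \<kappa>_sum: "(\<Sum>g\<in>G. \<kappa> g' g * of_int (g j)) = of_int (g' j)" if "g' \<in> G'" for g' j
    using \<kappa> that by simp
  define d where "d = (\<lambda>g. \<Sum>g'\<in>G'. c g' * \<kappa> g' g)"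
  have "\<forall>g\<in>G. 0 \<le> d g" unfolding d_def using c_nonneg \<kappa>_nonneg by (simp add: sum_nonneg)
  moreover have "\<exists>g\<in>G. 0 < d g"
  proof -
    obtain g' g where "g' \<in> G'" "0 < c g'" "g \<in> G" "0 < \<kappa> g' g" using c_pos \<kappa> by blast
    then have "0 < c g' * \<kappa> g' g" by simp
    also have "\<dots> \<le> d g" unfolding d_def using \<open>g' \<in> G'\<close> \<open>g \<in> G\<close> c_nonneg \<kappa>_nonneg \<open>finite G'\<close>
      by (intro member_le_sum) simp_all
    finally show ?thesis using \<open>g \<in> G\<close> by blast
  qed
  moreover have "(\<Sum>g\<in>G. d g * of_int (g j)) = 0" if "j < n" for j
  proof -
    have "(\<Sum>g\<in>G. d g * of_int (g j)) = (\<Sum>g'\<in>G'. c g' * (\<Sum>g\<in>G. \<kappa> g' g * of_int (g j)))"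
      unfolding d_def by (simp add: sum_distrib_left sum_distrib_right mult.assoc sum.swap[of _ G])
    also have "\<dots> = (\<Sum>g'\<in>G'. c g' * of_int (g' j))" by (simp add: \<kappa>_sum)
    finally show ?thesis using c_sum that by simp
  qed
  ultimately show ?thesis unfolding pos_dependent_def by blast
qed

lemma pos_combination_member: "g \<in> G \<Longrightarrow> finite G \<Longrightarrow> pos_combination G g"
  unfolding pos_combination_def
  by (intro exI[of _ "\<lambda>x. of_bool (x = g)"]) auto

lemma pos_combination_eliminate:
  assumes "finite G" "g \<in> G" "h \<in> G" "0 < g m" "h m < 0"
  shows "pos_combination G (eliminate m g h)"
proof -
  define c :: "(nat \<Rightarrow> int) \<Rightarrow> real"
    where "c = (\<lambda>x. of_bool (x = g) * of_int (- h m) + of_bool (x = h) * of_int (g m))"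
  have "g \<noteq> h" using assms by auto
  then have "(\<Sum>x\<in>G. c x * of_int (x j)) = of_int (eliminate m g h j)" for j
    using assms
    by (simp add: c_def eliminate_def left_diff_distrib distrib_right sum_subtractf sum.distrib mult.assoc)
  moreover have "0 < c g" using assms \<open>g \<noteq> h\<close> by (simp add: c_def)
  ultimately show ?thesis unfolding pos_combination_def using assms
    by (intro exI[of _ c]) (auto simp: c_def)
qed

theorem gordan_alternative:
  assumes "finite G"
  shows "(\<exists>y. \<forall>g\<in>G. 0 < dot m y g) \<or> pos_dependent m G"
  using assms
proof (induction m arbitrary: G)
  case 0
  show ?case
  proof (cases "G = {}")
    case False
    then have "pos_dependent 0 G"
      unfolding pos_dependent_def by (intro exI[of _ "\<lambda>_. 1"]) auto
    then show ?thesis ..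
  qed simp
next
  case (Suc m)
  define G' where "G' = {g\<in>G. g m = 0} \<union> (\<lambda>(g, h). eliminate m g h) ` ({g\<in>G. 0 < g m} \<times> {h\<in>G. h m < 0})"
  have elim_in: "eliminate m g h \<in> G'" if "g \<in> G" "h \<in> G" "0 < g m" "h m < 0" for g h
    unfolding G'_def using that by (intro UnI2 image_eqI[of _ _ "(g, h)"]) simp_all
  have "finite G'" using Suc.prems by (simp add: G'_def)
  from Suc.IH[OF this] show ?case
  proof
    assume "\<exists>y. \<forall>g\<in>G'. 0 < dot m y g"
    then obtain y where y: "\<forall>g\<in>G'. 0 < dot m y g" by blast
    have "\<exists>c. \<forall>g\<in>G. 0 < dot (Suc m) (y(m := c)) g"
    proof (rule separator_extend)
      show "0 < dot m y g" if "g \<in> G" "g m = 0" for g using y that by (simp add: G'_def)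
      show "0 < dot m y (eliminate m g h)" if "g \<in> G" "h \<in> G" "0 < g m" "h m < 0" for g h
        using y elim_in[OF that] by blast
    qed (use Suc.prems in simp)
    then obtain c where "\<forall>g\<in>G. 0 < dot (Suc m) (y(m := c)) g" ..
    then show ?thesis by (intro disjI1 exI[of _ "y(m := c)"])
  next
    assume "pos_dependent m G'"
    have G'_cases: "g' \<in> G \<and> g' m = 0 \<or>
        (\<exists>g h. g \<in> G \<and> h \<in> G \<and> 0 < g m \<and> h m < 0 \<and> g' = eliminate m g h)" if "g' \<in> G'" for g'
      using that unfolding G'_def by auto
    have "g' m = 0" if "g' \<in> G'" for g'
      using G'_cases[OF that] by (auto simp: eliminate_def)
    with \<open>pos_dependent m G'\<close> have dep: "pos_dependent (Suc m) G'" by (rule pos_dependent_Suc)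
    have comb: "pos_combination G g'" if "g' \<in> G'" for g'
      using G'_cases[OF that] Suc.prems pos_combination_member pos_combination_eliminate by blast
    have "pos_dependent (Suc m) G"
      using Suc.prems \<open>finite G'\<close> dep comb by (rule pos_dependent_transfer)
    then show ?thesis ..
  qed
qed

lemma in_cone_if_pos_dependent:
  assumes "finite G" and "pos_dependent m G"
  shows "\<exists>l \<delta>. (\<forall>i\<le>l. \<delta> i \<in> G) \<and> in_cone m (\<lambda>j. - \<delta> 0 j) {1..l} \<delta>"
proof -
  obtain c :: "(nat \<Rightarrow> int) \<Rightarrow> real" where c_nonneg: "\<forall>g\<in>G. 0 \<le> c g" and c_pos: "\<exists>g\<in>G. 0 < c g"
    and c_sum: "\<forall>j<m. (\<Sum>g\<in>G. c g * of_int (g j)) = 0"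
    using assms(2) unfolding pos_dependent_def by blast
  obtain g0 where g0: "g0 \<in> G" "0 < c g0" using c_pos by blast
  obtain gs where gs: "set gs = G" "distinct gs" using finite_distinct_list[OF assms(1)] by blast
  define l where "l = length gs"
  define \<delta> where "\<delta> i = (if i = 0 then g0 else gs ! (i - 1))" for i
  have "\<delta> i \<in> G" if "i \<le> l" for i
    using that g0 gs(1) by (cases i) (auto simp: \<delta>_def l_def)
  moreover have "in_cone m (\<lambda>j. - \<delta> 0 j) {1..l} \<delta>"
    unfolding in_cone_def
  proof (intro exI conjI ballI allI impI)
    define d where "d g = (if g = g0 then 0 else c g / c g0)" for g
    show "0 \<le> d (\<delta> i)" if "i \<in> {1..l}" for i
      using that \<open>\<And>i. i \<le> l \<Longrightarrow> \<delta> i \<in> G\<close> c_nonneg g0 by (simp add: d_def)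
    fix j assume "j < m"
    have "(\<Sum>i\<in>{1..l}. d (\<delta> i) * of_int (\<delta> i j)) = (\<Sum>i<l. d (gs ! i) * of_int ((gs ! i) j))"
      by (simp add: sum.atLeast1_atMost_eq \<delta>_def)
    also have "\<dots> = (\<Sum>g\<in>G. d g * of_int (g j))"
      unfolding l_def by (rule sum.reindex_bij_betw[OF bij_betw_nth[OF gs(2) refl gs(1)[symmetric]]])
    also have "\<dots> = (\<Sum>g\<in>G - {g0}. c g * of_int (g j) / c g0)"
      using g0 assms(1) by (simp add: d_def if_distrib[of "\<lambda>x. x * _"] sum.If_cases Diff_eq[symmetric])
    also have "\<dots> = (\<Sum>g\<in>G. c g * of_int (g j)) / c g0 - of_int (g0 j)"
      using g0 assms(1) by (simp add: sum.remove sum_divide_distrib add_divide_distrib)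
    also have "\<dots> = - of_int (\<delta> 0 j)" using c_sum \<open>j < m\<close> by (simp add: \<delta>_def)
    finally show "real_of_int (- \<delta> 0 j) = (\<Sum>i\<in>{1..l}. d (\<delta> i) * of_int (\<delta> i j))" by simp
  qed
  ultimately show ?thesis by blast
qed

section \<open>Integral separators\<close>

definition gram :: "nat \<Rightarrow> (nat \<Rightarrow> int) list \<Rightarrow> int mat" where
  "gram m ts = mat (length ts) (length ts) (\<lambda>(i, k). \<Sum>j<m. (ts ! i) j * (ts ! k) j)"

definition lin_indep :: "nat \<Rightarrow> (nat \<Rightarrow> int) list \<Rightarrow> bool" where
  "lin_indep m ts \<longleftrightarrow> (\<forall>\<alpha>::nat \<Rightarrow> real.
     (\<forall>j<m. (\<Sum>i<length ts. \<alpha> i * of_int ((ts ! i) j)) = 0) \<longrightarrow> (\<forall>i<length ts. \<alpha> i = 0))"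

definition in_span :: "nat \<Rightarrow> (nat \<Rightarrow> int) list \<Rightarrow> (nat \<Rightarrow> int) \<Rightarrow> bool" where
  "in_span m ts g \<longleftrightarrow>
     (\<exists>\<alpha>::nat \<Rightarrow> real. \<forall>j<m. of_int (g j) = (\<Sum>i<length ts. \<alpha> i * of_int ((ts ! i) j)))"

lemma gram_carrier: "gram m ts \<in> carrier_mat (length ts) (length ts)"
  by (simp add: gram_def)

lemma gram_index:
  "i < length ts \<Longrightarrow> k < length ts \<Longrightarrow> gram m ts $$ (i, k) = (\<Sum>j<m. (ts ! i) j * (ts ! k) j)"
  by (simp add: gram_def)

lemma mult_adj_mat_index:
  assumes A: "A \<in> carrier_mat n n" and "i < n" "k < n"
  shows "(\<Sum>l<n. A $$ (i, l) * adj_mat A $$ (l, k)) = (if i = k then det A else 0)"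
proof -
  have "(A * adj_mat A) $$ (i, k) = (if i = k then det A else 0)"
    using adj_mat(2)[OF A] assms by simp
  moreover have "(A * adj_mat A) $$ (i, k) = (\<Sum>l<n. A $$ (i, l) * adj_mat A $$ (l, k))"
    using A adj_mat(1)[OF A] assms by (simp add: scalar_prod_def atLeast0LessThan)
  ultimately show ?thesis by simp
qed

lemma exists_solution_if_det_nonzero:
  fixes A :: "int mat" and b :: "nat \<Rightarrow> real"
  assumes A: "A \<in> carrier_mat n n" and det: "det A \<noteq> 0"
  shows "\<exists>w. \<forall>k<n. (\<Sum>i<n. of_int (A $$ (k, i)) * w i) = b k"
proof -
  define w where "w = (\<lambda>i. (\<Sum>l<n. of_int (adj_mat A $$ (i, l)) * b l) / of_int (det A))"
  have "(\<Sum>i<n. of_int (A $$ (k, i)) * w i) = b k" if k: "k < n" for k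
  proof -
    have "(\<Sum>i<n. of_int (A $$ (k, i)) * w i)
        = (\<Sum>i<n. \<Sum>l<n. of_int (A $$ (k, i)) * of_int (adj_mat A $$ (i, l)) * b l) / of_int (det A)"
      unfolding w_def by (simp add: sum_divide_distrib sum_distrib_left mult.assoc)
    also have "\<dots> = (\<Sum>l<n. of_int (\<Sum>i<n. A $$ (k, i) * adj_mat A $$ (i, l)) * b l) / of_int (det A)"
      by (subst sum.swap) (simp add: sum_distrib_right)
    also have "\<dots> = (\<Sum>l<n. if k = l then of_int (det A) * b l else 0) / of_int (det A)"
      using A k by (intro arg_cong[where f = "\<lambda>x. x / _"] sum.cong) (simp_all add: mult_adj_mat_index)
    also have "\<dots> = b k" using k det by simp
    finally show ?thesis .
  qed
  then show ?thesis by blast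
qed

lemma det_gram_nonzero_if_lin_indep:
  assumes indep: "lin_indep m ts"
  shows "det (gram m ts) \<noteq> 0"
proof
  let ?r = "length ts" and ?G = "gram m ts" and ?t = "\<lambda>i j. (ts ! i) j"
  assume "det ?G = 0"
  then obtain v where v: "v \<in> carrier_vec ?r" "v \<noteq> 0\<^sub>v ?r" and kernel: "?G *\<^sub>v v = 0\<^sub>v ?r"
    using det_0_iff_vec_prod_zero[OF gram_carrier] by blast
  define u where "u = (\<lambda>j. \<Sum>i<?r. v $ i * ?t i j)"
  have row: "(\<Sum>k<?r. ?G $$ (i, k) * v $ k) = 0" if "i < ?r" for i
  proof -
    have "(?G *\<^sub>v v) $ i = (\<Sum>k<?r. ?G $$ (i, k) * v $ k)"
      using that v gram_carrier[of m ts] by (simp add: scalar_prod_def atLeast0LessThan)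
    then show ?thesis using kernel that by simp
  qed
  have reorder: "v $ i * ?t i j * (v $ k * ?t k j) = v $ i * (?t i j * ?t k j) * v $ k" for i j k
    by (simp add: algebra_simps)
  text \<open>\<open>v\<close> lies in the kernel of the Gram matrix, so \<open>\<Sum>\<^sub>j (u j)\<^sup>2 = v\<^sup>T (gram m ts) v = 0\<close>.\<close>
  have "(\<Sum>j<m. (u j)\<^sup>2) = (\<Sum>j<m. \<Sum>i<?r. \<Sum>k<?r. v $ i * (?t i j * ?t k j) * v $ k)"
    unfolding u_def by (simp only: power2_eq_square sum_product reorder)
  also have "\<dots> = (\<Sum>i<?r. \<Sum>j<m. \<Sum>k<?r. v $ i * (?t i j * ?t k j) * v $ k)"
    by (rule sum.swap)
  also have "\<dots> = (\<Sum>i<?r. \<Sum>k<?r. \<Sum>j<m. v $ i * (?t i j * ?t k j) * v $ k)"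
    by (rule sum.cong[OF refl], rule sum.swap)
  also have "\<dots> = (\<Sum>i<?r. v $ i * (\<Sum>k<?r. ?G $$ (i, k) * v $ k))"
    by (simp add: gram_index sum_distrib_left sum_distrib_right mult.assoc)
  also have "\<dots> = 0" using row by simp
  finally have "(\<Sum>j<m. (u j)\<^sup>2) = 0" .
  then have "u j = 0" if "j < m" for j
    using that by (subst (asm) sum_nonneg_eq_0_iff) auto
  moreover have "(\<Sum>i<?r. of_int (v $ i) * of_int (?t i j)) = (of_int (u j) :: real)" for j
    by (simp add: u_def)
  ultimately have "of_int (v $ i) = (0::real)" if "i < ?r" for i
    using indep[unfolded lin_indep_def, rule_format, of "\<lambda>i. of_int (v $ i)"] that by simp
  then have "v = 0\<^sub>v ?r" using v(1) by (intro eq_vecI) auto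
  then show False using v(2) by simp
qed

lemma length_le_if_lin_indep:
  assumes indep: "lin_indep m ts"
  shows "length ts \<le> m"
proof (rule ccontr)
  assume "\<not> length ts \<le> m"
  then have m_less: "m < length ts" by simp
  let ?r = "length ts"
  text \<open>The square matrix of the vectors padded with zeros has a zero last column, so its
    transpose has a nontrivial kernel, which is a linear dependence of \<open>ts\<close>.\<close>
  define P :: "int mat" where "P = mat ?r ?r (\<lambda>(i, j). if j < m then (ts ! i) j else 0)"
  have P_carrier: "P \<in> carrier_mat ?r ?r" by (simp add: P_def)
  define e :: "int vec" where "e = vec ?r (\<lambda>j. if j = ?r - 1 then 1 else 0)"
  have e_carrier: "e \<in> carrier_vec ?r" by (simp add: e_def)
  have "e $ (?r - 1) = 1" using m_less by (simp add: e_def)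
  then have e_nonzero: "e \<noteq> 0\<^sub>v ?r" using m_less by auto
  have "P *\<^sub>v e = 0\<^sub>v ?r"
  proof (rule eq_vecI)
    fix i assume i: "i < dim_vec (0\<^sub>v ?r :: int vec)"
    then have i': "i < ?r" by simp
    have "(P *\<^sub>v e) $ i = (\<Sum>j<?r. P $$ (i, j) * e $ j)"
      using i' P_carrier e_carrier by (simp add: scalar_prod_def atLeast0LessThan)
    also have "\<dots> = (\<Sum>j<?r. 0)"
      using i' m_less by (intro sum.cong refl) (auto simp: P_def e_def)
    finally show "(P *\<^sub>v e) $ i = 0\<^sub>v ?r $ i" using i' by simp
  qed (simp add: P_def)
  then have "det P = 0" using det_0_iff_vec_prod_zero[OF P_carrier] e_carrier e_nonzero by blast
  then have "det (transpose_mat P) = 0" using det_transpose[OF P_carrier] by simp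
  then obtain v where v: "v \<in> carrier_vec ?r" "v \<noteq> 0\<^sub>v ?r" and kernel: "transpose_mat P *\<^sub>v v = 0\<^sub>v ?r"
    using det_0_iff_vec_prod_zero[of "transpose_mat P" ?r] P_carrier by auto
  have dependence: "(\<Sum>i<?r. real_of_int (v $ i) * real_of_int ((ts ! i) j)) = 0" if j: "j < m" for j
  proof -
    have jr: "j < ?r" using j m_less by simp
    have "(transpose_mat P *\<^sub>v v) $ j = (\<Sum>i<?r. P $$ (i, j) * v $ i)"
      using jr P_carrier v by (simp add: scalar_prod_def atLeast0LessThan)
    also have "\<dots> = (\<Sum>i<?r. v $ i * (ts ! i) j)"
      using jr j by (intro sum.cong refl) (auto simp: P_def)
    finally have "(\<Sum>i<?r. v $ i * (ts ! i) j) = 0" using kernel jr by simp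
    then have "real_of_int (\<Sum>i<?r. v $ i * (ts ! i) j) = 0" by simp
    then show ?thesis by simp
  qed
  have "(\<forall>j<m. (\<Sum>i<?r. real_of_int (v $ i) * real_of_int ((ts ! i) j)) = 0) \<longrightarrow> (\<forall>i<?r. real_of_int (v $ i) = 0)"
    using indep unfolding lin_indep_def by (rule spec[where x="\<lambda>i. real_of_int (v $ i)"])
  then have "\<forall>i<?r. real_of_int (v $ i) = 0" using dependence by blast
  then have "v = 0\<^sub>v ?r" using v(1) by (intro eq_vecI) auto
  then show False using v(2) by simp
qed

text \<open>Project \<open>g\<close> orthogonally onto the span of \<open>ts\<close>; the residual \<open>z\<close> is nonzero and
  satisfies \<open>dot m z g = \<bar>z\<bar>\<^sup>2\<close>.\<close>
lemma exists_orthogonal_witness: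
  assumes indep: "lin_indep m ts" and g: "\<not> in_span m ts g"
  shows "\<exists>z. (\<forall>t\<in>set ts. dot m z t = 0) \<and> 0 < dot m z g"
proof -
  let ?r = "length ts" and ?t = "\<lambda>i j. real_of_int ((ts ! i) j)"
  define b where "b = (\<lambda>k. \<Sum>j<m. ?t k j * real_of_int (g j))"
  obtain w where w: "\<And>k. k < ?r \<Longrightarrow> (\<Sum>i<?r. of_int (gram m ts $$ (k, i)) * w i) = b k"
    using exists_solution_if_det_nonzero[OF gram_carrier det_gram_nonzero_if_lin_indep[OF indep]]
    by blast
  have gram_w: "(\<Sum>i<?r. (\<Sum>j<m. ?t k j * ?t i j) * w i) = b k" if "k < ?r" for k
    using w[OF that] that by (simp add: gram_index)
  define z where "z = (\<lambda>j. real_of_int (g j) - (\<Sum>i<?r. w i * ?t i j))"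
  have orth: "dot m z (ts ! k) = 0" if k: "k < ?r" for k
  proof -
    have "dot m z (ts ! k) = (\<Sum>j<m. real_of_int (g j) * ?t k j) - (\<Sum>j<m. \<Sum>i<?r. w i * ?t i j * ?t k j)"
      unfolding dot_def z_def by (simp add: algebra_simps sum_subtractf sum_distrib_left sum_distrib_right)
    also have "(\<Sum>j<m. \<Sum>i<?r. w i * ?t i j * ?t k j) = (\<Sum>i<?r. (\<Sum>j<m. ?t k j * ?t i j) * w i)"
      by (subst sum.swap) (simp add: sum_distrib_right sum_distrib_left mult.commute mult.left_commute)
    also have "\<dots> = b k" using gram_w[OF k] .
    finally show ?thesis by (simp add: b_def mult.commute)
  qed
  have "\<exists>j<m. z j \<noteq> 0"
  proof (rule ccontr)
    assume "\<not> (\<exists>j<m. z j \<noteq> 0)"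
    then have "in_span m ts g" unfolding in_span_def by (intro exI[of _ w]) (auto simp: z_def)
    with g show False ..
  qed
  then obtain j0 where j0: "j0 < m" "z j0 \<noteq> 0" by blast
  have "dot m z g = (\<Sum>j<m. z j * z j) + (\<Sum>j<m. \<Sum>i<?r. z j * (w i * ?t i j))"
    unfolding dot_def by (simp add: z_def algebra_simps sum_subtractf sum_distrib_left sum.distrib[symmetric])
  also have "(\<Sum>j<m. \<Sum>i<?r. z j * (w i * ?t i j)) = (\<Sum>i<?r. w i * dot m z (ts ! i))"
    unfolding dot_def by (subst sum.swap) (simp add: sum_distrib_left algebra_simps)
  also have "\<dots> = 0" using orth by simp
  finally have "dot m z g = (\<Sum>j<m. z j * z j)" by simp
  moreover have "0 < z j0 * z j0" using j0 by (auto simp: zero_less_mult_iff linorder_neq_iff)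
  moreover have "z j0 * z j0 \<le> (\<Sum>j<m. z j * z j)" using j0 by (intro member_le_sum) auto
  ultimately have "0 < dot m z g" by linarith
  moreover have "\<forall>t\<in>set ts. dot m z t = 0" using orth by (auto simp: in_set_conv_nth)
  ultimately show ?thesis by blast
qed

lemma dot_diff_scale: "dot m (\<lambda>j. y j - s * z j) g = dot m y g - s * dot m z g"
  unfolding dot_def by (simp add: algebra_simps sum_subtractf sum_distrib_left)

lemma lin_indep_Nil: "lin_indep m []"
  by (simp add: lin_indep_def)

lemma lin_indep_snoc:
  assumes indep: "lin_indep m ts" and orth: "\<forall>t\<in>set ts. dot m z t = 0" and h: "dot m z h \<noteq> 0"
  shows "lin_indep m (ts @ [h])"
  unfolding lin_indep_def
proof (intro allI impI)
  let ?r = "length ts"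
  fix \<alpha> :: "nat \<Rightarrow> real" and i
  assume comb: "\<forall>j<m. (\<Sum>i<length (ts @ [h]). \<alpha> i * of_int (((ts @ [h]) ! i) j)) = 0"
    and i: "i < length (ts @ [h])"
  have comb': "(\<Sum>i<?r. \<alpha> i * of_int ((ts ! i) j)) + \<alpha> ?r * of_int (h j) = 0" if "j < m" for j
  proof -
    have "(\<Sum>i<?r. \<alpha> i * of_int (((ts @ [h]) ! i) j)) = (\<Sum>i<?r. \<alpha> i * of_int ((ts ! i) j))"
      by (intro sum.cong refl) (simp add: nth_append)
    moreover have "(\<Sum>i<length (ts @ [h]). \<alpha> i * of_int (((ts @ [h]) ! i) j)) = 0" using comb that by blast
    ultimately show ?thesis by simp
  qed
  have "0 = (\<Sum>j<m. z j * ((\<Sum>i<?r. \<alpha> i * of_int ((ts ! i) j)) + \<alpha> ?r * of_int (h j)))"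
    using comb' by simp
  also have "\<dots> = (\<Sum>i<?r. \<alpha> i * dot m z (ts ! i)) + \<alpha> ?r * dot m z h"
    unfolding dot_def
    by (simp add: sum.distrib sum_distrib_left sum.swap[of _ "{..<m}"] algebra_simps)
  also have "\<dots> = \<alpha> ?r * dot m z h" using orth by simp
  finally have last: "\<alpha> ?r = 0" using h by simp
  then have "\<forall>j<m. (\<Sum>i<?r. \<alpha> i * of_int ((ts ! i) j)) = 0" using comb' by simp
  then have "\<forall>i<?r. \<alpha> i = 0" using indep unfolding lin_indep_def by blast
  then show "\<alpha> i = 0" using i last by (cases "i < ?r") (auto simp: less_Suc_eq)
qed

text \<open>One pivoting step: move \<open>y\<close> in a direction \<open>z\<close> orthogonal to the tight vectors until a new
  constraint becomes tight (a ratio test).\<close>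
lemma tight_basis_extend:
  assumes "finite G" and feasible: "\<forall>g\<in>G. 1 \<le> dot m y g" and tight: "\<forall>t\<in>set ts. dot m y t = 1"
    and indep: "lin_indep m ts" and g: "g \<in> G" "\<not> in_span m ts g"
  shows "\<exists>y' h. h \<in> G \<and> lin_indep m (ts @ [h]) \<and> (\<forall>t\<in>set (ts @ [h]). dot m y' t = 1) \<and>
    (\<forall>g\<in>G. 1 \<le> dot m y' g)"
proof -
  obtain z where orth: "\<forall>t\<in>set ts. dot m z t = 0" and zg: "0 < dot m z g"
    using exists_orthogonal_witness[OF indep g(2)] by blast
  define H where "H = {h\<in>G. 0 < dot m z h}"
  define ratio where "ratio = (\<lambda>h. (dot m y h - 1) / dot m z h)"
  have "finite H" "g \<in> H" using \<open>finite G\<close> g zg by (simp_all add: H_def)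
  then have "Min (ratio ` H) \<in> ratio ` H" by (intro Min_in) auto
  then obtain h where h: "h \<in> H" "ratio h = Min (ratio ` H)" by auto
  have h_min: "ratio h \<le> ratio h'" if "h' \<in> H" for h'
    unfolding h(2) using \<open>finite H\<close> that by (intro Min_le) auto
  have hG: "h \<in> G" and zh: "0 < dot m z h" using h(1) by (simp_all add: H_def)
  have "0 \<le> ratio h" unfolding ratio_def using feasible hG zh by (auto intro!: divide_nonneg_pos)
  define y' where "y' = (\<lambda>j. y j - ratio h * z j)"
  have y'_feasible: "\<forall>h'\<in>G. 1 \<le> dot m y' h'"
  proof
    fix h' assume h': "h' \<in> G"
    show "1 \<le> dot m y' h'"
    proof (cases "0 < dot m z h'")
      case True
      then have "ratio h \<le> (dot m y h' - 1) / dot m z h'"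
        using h_min h' by (simp add: H_def ratio_def)
      then have "ratio h * dot m z h' \<le> dot m y h' - 1" using True by (simp add: pos_le_divide_eq)
      then show ?thesis by (simp add: y'_def dot_diff_scale)
    next
      case False
      then have "ratio h * dot m z h' \<le> 0" using \<open>0 \<le> ratio h\<close> by (simp add: mult_nonneg_nonpos)
      moreover have "1 \<le> dot m y h'" using feasible h' by blast
      ultimately show ?thesis by (simp add: y'_def dot_diff_scale)
    qed
  qed
  have "ratio h * dot m z h = dot m y h - 1" using zh by (simp add: ratio_def)
  then have "dot m y' h = 1" by (simp add: y'_def dot_diff_scale)
  moreover have "\<forall>t\<in>set ts. dot m y' t = 1" using tight orth by (simp add: y'_def dot_diff_scale)
  ultimately have "\<forall>t\<in>set (ts @ [h]). dot m y' t = 1" by simp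
  moreover have "lin_indep m (ts @ [h])" using indep orth zh by (intro lin_indep_snoc) auto
  ultimately show ?thesis using y'_feasible hG by blast
qed

lemma exists_tight_basis:
  assumes "finite G" and "\<forall>g\<in>G. 1 \<le> dot m y0 g"
  shows "\<exists>y ts. set ts \<subseteq> G \<and> lin_indep m ts \<and> (\<forall>t\<in>set ts. dot m y t = 1) \<and>
    (\<forall>g\<in>G. 1 \<le> dot m y g) \<and> (\<forall>g\<in>G. in_span m ts g)"
proof -
  define Q where "Q n \<longleftrightarrow> (\<exists>y ts. length ts = n \<and> set ts \<subseteq> G \<and> lin_indep m ts \<and>
    (\<forall>t\<in>set ts. dot m y t = 1) \<and> (\<forall>g\<in>G. 1 \<le> dot m y g))" for n
  have "Q 0" unfolding Q_def using assms(2) lin_indep_Nil by auto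
  moreover have "\<forall>n. Q n \<longrightarrow> n \<le> m" unfolding Q_def using length_le_if_lin_indep by blast
  ultimately obtain n where "Q n" and n_max: "\<And>n'. Q n' \<Longrightarrow> n' \<le> n"
    using Nat.ex_has_greatest_nat[of Q 0 m] by blast
  then obtain y ts where ts: "length ts = n" "lin_indep m ts" "\<forall>t\<in>set ts. dot m y t = 1" "set ts \<subseteq> G"
    and feasible: "\<forall>g\<in>G. 1 \<le> dot m y g" unfolding Q_def by blast
  have "in_span m ts g" if g: "g \<in> G" for g
  proof (rule ccontr)
    assume "\<not> in_span m ts g"
    with g obtain y' h where "h \<in> G" "lin_indep m (ts @ [h])" "\<forall>t\<in>set (ts @ [h]). dot m y' t = 1"
      "\<forall>g\<in>G. 1 \<le> dot m y' g"
      using tight_basis_extend[OF assms(1) feasible ts(3,2)] by blast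
    then have "Q (Suc n)" unfolding Q_def using ts(1,4) by (intro exI[of _ y'] exI[of _ "ts @ [h]"]) simp
    then show False using n_max by fastforce
  qed
  then show ?thesis using ts feasible by blast
qed

text \<open>With \<open>S = adj (gram m ts) \<cdot> (1, \<dots>, 1)\<close>, the vector \<open>\<Sum>\<^sub>i S\<^sub>i (ts ! i)\<close> has inner product
  \<open>det (gram m ts)\<close> with every \<open>ts ! k\<close>, because \<open>gram m ts \<cdot> adj (gram m ts) = det (gram m ts) \<cdot> I\<close>.\<close>
definition adjugate_separator :: "nat \<Rightarrow> (nat \<Rightarrow> int) list \<Rightarrow> nat \<Rightarrow> int" where
  "adjugate_separator m ts = (\<lambda>j. sgn (det (gram m ts)) *
     (\<Sum>i<length ts. (ts ! i) j * (\<Sum>l<length ts. adj_mat (gram m ts) $$ (i, l))))"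

lemma adjugate_separator_basis:
  assumes k: "k < length ts"
  shows "(\<Sum>j<m. adjugate_separator m ts j * (ts ! k) j) = \<bar>det (gram m ts)\<bar>"
proof -
  let ?r = "length ts" and ?G = "gram m ts"
  let ?adj = "adj_mat ?G"
  define S where "S = (\<lambda>i. \<Sum>l<?r. ?adj $$ (i, l))"
  have "(\<Sum>j<m. adjugate_separator m ts j * (ts ! k) j)
      = sgn (det ?G) * (\<Sum>j<m. \<Sum>i<?r. (ts ! i) j * S i * (ts ! k) j)"
    by (simp add: adjugate_separator_def S_def sum_distrib_left sum_distrib_right mult.assoc)
  also have "(\<Sum>j<m. \<Sum>i<?r. (ts ! i) j * S i * (ts ! k) j) = (\<Sum>i<?r. \<Sum>j<m. (ts ! i) j * S i * (ts ! k) j)"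
    by (rule sum.swap)
  also have "\<dots> = (\<Sum>i<?r. ?G $$ (k, i) * S i)"
  proof (rule sum.cong[OF refl])
    fix i assume "i \<in> {..<?r}"
    then show "(\<Sum>j<m. (ts ! i) j * S i * (ts ! k) j) = ?G $$ (k, i) * S i"
      using k by (simp add: gram_index sum_distrib_left algebra_simps)
  qed
  also have "\<dots> = (\<Sum>l<?r. \<Sum>i<?r. ?G $$ (k, i) * ?adj $$ (i, l))"
    unfolding S_def sum_distrib_left by (rule sum.swap)
  also have "\<dots> = det ?G"
    using mult_adj_mat_index[OF gram_carrier k] k by simp
  also have "sgn (det ?G) * det ?G = \<bar>det ?G\<bar>" by (simp add: abs_sgn)
  finally show ?thesis .
qed

lemma adjugate_separator_ge_one:
  assumes indep: "lin_indep m ts" and tight: "\<forall>t\<in>set ts. dot m y t = 1"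
    and g: "1 \<le> dot m y g" "in_span m ts g"
  shows "1 \<le> (\<Sum>j<m. adjugate_separator m ts j * g j)"
proof -
  let ?r = "length ts" and ?G = "gram m ts" and ?Y = "adjugate_separator m ts"
  obtain \<alpha> where \<alpha>: "\<forall>j<m. real_of_int (g j) = (\<Sum>i<?r. \<alpha> i * real_of_int ((ts ! i) j))"
    using g(2) unfolding in_span_def by blast
  have "real_of_int (\<Sum>j<m. ?Y j * g j) = (\<Sum>j<m. real_of_int (?Y j) * (\<Sum>i<?r. \<alpha> i * real_of_int ((ts ! i) j)))"
    using \<alpha> by simp
  also have "\<dots> = (\<Sum>i<?r. \<alpha> i * real_of_int (\<Sum>j<m. ?Y j * (ts ! i) j))"
    by (simp only: of_int_sum of_int_mult sum_distrib_left sum_distrib_right)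
      (subst sum.swap, simp add: algebra_simps)
  also have "\<dots> = (\<Sum>i<?r. \<alpha> i) * real_of_int \<bar>det ?G\<bar>"
    by (simp add: adjugate_separator_basis sum_distrib_right)
  finally have Y_g: "real_of_int (\<Sum>j<m. ?Y j * g j) = (\<Sum>i<?r. \<alpha> i) * real_of_int \<bar>det ?G\<bar>" .
  have "dot m y g = (\<Sum>j<m. y j * (\<Sum>i<?r. \<alpha> i * real_of_int ((ts ! i) j)))"
    unfolding dot_def using \<alpha> by simp
  also have "\<dots> = (\<Sum>i<?r. \<alpha> i * dot m y (ts ! i))"
    unfolding dot_def by (simp only: sum_distrib_left sum_distrib_right) (subst sum.swap, simp add: algebra_simps)
  also have "\<dots> = (\<Sum>i<?r. \<alpha> i)" using tight by simp
  finally have "1 \<le> (\<Sum>i<?r. \<alpha> i)" using g(1) by simp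
  moreover have "1 \<le> real_of_int \<bar>det ?G\<bar>" using det_gram_nonzero_if_lin_indep[OF indep] by simp
  ultimately have "1 * 1 \<le> (\<Sum>i<?r. \<alpha> i) * real_of_int \<bar>det ?G\<bar>" by (intro mult_mono) auto
  then have "1 \<le> real_of_int (\<Sum>j<m. ?Y j * g j)" unfolding Y_g by simp
  then show ?thesis by (metis of_int_1 of_int_le_iff)
qed

lemma abs_det_le_fact_mult_power:
  fixes A :: "int mat"
  assumes A: "A \<in> carrier_mat n n" and bound: "\<And>i j. i < n \<Longrightarrow> j < n \<Longrightarrow> \<bar>A $$ (i, j)\<bar> \<le> b"
  shows "\<bar>det A\<bar> \<le> int (fact n) * b ^ n"
proof -
  have "\<bar>det A\<bar> = \<bar>\<Sum>p\<in>{p. p permutes {0..<n}}. signof p * (\<Prod>i = 0..<n. A $$ (i, p i))\<bar>"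
    using det_def'[OF A] by simp
  also have "\<dots> \<le> (\<Sum>p\<in>{p. p permutes {0..<n}}. \<bar>signof p * (\<Prod>i = 0..<n. A $$ (i, p i))\<bar>)"
    by (rule sum_abs)
  also have "\<dots> \<le> (\<Sum>p\<in>{p. p permutes {0..<n}}. b ^ n)"
  proof (rule sum_mono)
    fix p assume "p \<in> {p. p permutes {0..<n}}"
    then have p: "p permutes {0..<n}" by simp
    have "\<bar>signof p * (\<Prod>i = 0..<n. A $$ (i, p i))\<bar> = (\<Prod>i = 0..<n. \<bar>A $$ (i, p i)\<bar>)"
      by (simp add: abs_mult abs_prod sign_def)
    also have "\<dots> \<le> (\<Prod>i = 0..<n. b)"
      using bound permutes_in_image[OF p] by (intro prod_mono) simp
    finally show "\<bar>signof p * (\<Prod>i = 0..<n. A $$ (i, p i))\<bar> \<le> b ^ n" by simp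
  qed
  also have "\<dots> = int (fact n) * b ^ n"
    by (simp add: card_permutations[of "{0..<n}" n])
  finally show ?thesis .
qed

lemma abs_gram_index_le:
  assumes bound: "\<forall>t\<in>set ts. \<forall>j<m. \<bar>t j\<bar> \<le> R" and "i < length ts" "k < length ts"
  shows "\<bar>gram m ts $$ (i, k)\<bar> \<le> int m * R\<^sup>2"
proof -
  have "\<bar>gram m ts $$ (i, k)\<bar> \<le> (\<Sum>j<m. \<bar>(ts ! i) j * (ts ! k) j\<bar>)"
    using assms(2,3) by (simp add: gram_index)
  also have "\<dots> \<le> (\<Sum>j<m. R * R)"
    using bound assms(2,3) by (intro sum_mono) (simp add: abs_mult mult_mono')
  also have "\<dots> = int m * R\<^sup>2" by (simp add: power2_eq_square)
  finally show ?thesis .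
qed

lemma abs_adj_gram_le:
  assumes bound: "\<forall>t\<in>set ts. \<forall>j<m. \<bar>t j\<bar> \<le> R" and il: "i < length ts" "l < length ts"
  shows "\<bar>adj_mat (gram m ts) $$ (i, l)\<bar> \<le> int (fact (length ts - 1)) * (int m * R\<^sup>2) ^ (length ts - 1)"
proof -
  let ?r = "length ts" and ?G = "gram m ts"
  have "adj_mat ?G $$ (i, l) = (-1) ^ (l + i) * det (mat_delete ?G l i)"
    using il by (simp add: adj_mat_def gram_def cofactor_def)
  then have "\<bar>adj_mat ?G $$ (i, l)\<bar> = \<bar>det (mat_delete ?G l i)\<bar>" by (simp add: abs_mult)
  also have "\<dots> \<le> int (fact (?r - 1)) * (int m * R\<^sup>2) ^ (?r - 1)"
  proof (rule abs_det_le_fact_mult_power)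
    show "mat_delete ?G l i \<in> carrier_mat (?r - 1) (?r - 1)" using mat_delete_carrier[OF gram_carrier] .
    fix a b assume ab: "a < ?r - 1" "b < ?r - 1"
    then have "mat_delete ?G l i $$ (a, b) = ?G $$ (if a < l then a else Suc a, if b < i then b else Suc b)"
      by (simp add: mat_delete_def gram_def)
    also have "\<bar>\<dots>\<bar> \<le> int m * R\<^sup>2" using ab by (intro abs_gram_index_le[OF bound]) auto
    finally show "\<bar>mat_delete ?G l i $$ (a, b)\<bar> \<le> int m * R\<^sup>2" .
  qed
  finally show ?thesis .
qed

lemma abs_adjugate_separator_le:
  assumes indep: "lin_indep m ts" and bound: "\<forall>t\<in>set ts. \<forall>j<m. \<bar>t j\<bar> \<le> R"
    and R: "1 \<le> R" and j: "j < m"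
  shows "\<bar>adjugate_separator m ts j\<bar> \<le> int (length ts * fact (length ts)) * R * (int m * R\<^sup>2) ^ (length ts - 1)"
proof (cases "ts = []")
  case True
  then show ?thesis by (simp add: adjugate_separator_def)
next
  case False
  let ?r = "length ts" and ?G = "gram m ts"
  define C where "C = int (fact (?r - 1)) * (int m * R\<^sup>2) ^ (?r - 1)"
  have "\<bar>sgn (det ?G)\<bar> = 1" using det_gram_nonzero_if_lin_indep[OF indep] by (simp add: abs_sgn_eq)
  then have "\<bar>adjugate_separator m ts j\<bar> = \<bar>\<Sum>i<?r. (ts ! i) j * (\<Sum>l<?r. adj_mat ?G $$ (i, l))\<bar>"
    by (simp add: adjugate_separator_def abs_mult)
  also have "\<dots> \<le> (\<Sum>i<?r. \<bar>(ts ! i) j * (\<Sum>l<?r. adj_mat ?G $$ (i, l))\<bar>)" by (rule sum_abs)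
  also have "\<dots> \<le> (\<Sum>i<?r. R * (int ?r * C))"
  proof (rule sum_mono)
    fix i assume i: "i \<in> {..<?r}"
    have "\<bar>\<Sum>l<?r. adj_mat ?G $$ (i, l)\<bar> \<le> (\<Sum>l<?r. \<bar>adj_mat ?G $$ (i, l)\<bar>)" by (rule sum_abs)
    also have "\<dots> \<le> (\<Sum>l<?r. C)"
      using abs_adj_gram_le[OF bound] i by (intro sum_mono) (simp add: C_def)
    finally have "\<bar>\<Sum>l<?r. adj_mat ?G $$ (i, l)\<bar> \<le> int ?r * C" by simp
    moreover have "\<bar>(ts ! i) j\<bar> \<le> R" using bound i j by simp
    ultimately show "\<bar>(ts ! i) j * (\<Sum>l<?r. adj_mat ?G $$ (i, l))\<bar> \<le> R * (int ?r * C)"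
      unfolding abs_mult using R by (intro mult_mono) auto
  qed
  also have "\<dots> = int ?r * R * (int ?r * int (fact (?r - 1))) * (int m * R\<^sup>2) ^ (?r - 1)"
    by (simp add: C_def mult.assoc mult.left_commute)
  also have "int ?r * int (fact (?r - 1)) = int (fact ?r)"
  proof -
    have "?r * fact (?r - 1) = fact ?r" using False by (cases ?r) auto
    then show ?thesis by (simp only: of_nat_mult[symmetric])
  qed
  finally show ?thesis by (simp add: mult.assoc mult.left_commute)
qed

definition separator_bound :: "nat \<Rightarrow> int \<Rightarrow> int" where
  "separator_bound m R = int (m * fact m) * R * (int m * R\<^sup>2) ^ (m - 1)"

lemma adjugate_separator_bound:
  assumes indep: "lin_indep m ts" and bound: "\<forall>t\<in>set ts. \<forall>j<m. \<bar>t j\<bar> \<le> R"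
    and R: "1 \<le> R" and j: "j < m"
  shows "\<bar>adjugate_separator m ts j\<bar> \<le> separator_bound m R"
proof -
  let ?r = "length ts" and ?B = "int m * R\<^sup>2"
  have r_le: "?r \<le> m" using length_le_if_lin_indep[OF indep] .
  have "1 \<le> R\<^sup>2" "1 \<le> int m" using R j by simp_all
  then have "1 * 1 \<le> ?B" by (intro mult_mono) auto
  have "int (?r * fact ?r) \<le> int (m * fact m)" using r_le by (simp add: fact_mono mult_mono)
  moreover have "?B ^ (?r - 1) \<le> ?B ^ (m - 1)" using r_le \<open>1 * 1 \<le> ?B\<close> by (intro power_increasing) auto
  ultimately have "int (?r * fact ?r) * R * ?B ^ (?r - 1) \<le> int (m * fact m) * R * ?B ^ (m - 1)"
    using R \<open>1 * 1 \<le> ?B\<close> by (intro mult_mono) auto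
  then show ?thesis
    using abs_adjugate_separator_le[OF indep bound R j] unfolding separator_bound_def by linarith
qed

lemma exists_dot_ge_one_if_pos:
  assumes "finite G" and pos: "\<forall>g\<in>G. 0 < dot m y g"
  shows "\<exists>y'. \<forall>g\<in>G. 1 \<le> dot m y' g"
proof (cases "G = {}")
  case False
  define \<epsilon> where "\<epsilon> = Min (dot m y ` G)"
  have "\<epsilon> \<in> dot m y ` G" unfolding \<epsilon>_def using assms False by (intro Min_in) auto
  then have "0 < \<epsilon>" using pos by auto
  have "\<epsilon> \<le> dot m y g" if "g \<in> G" for g unfolding \<epsilon>_def using assms that by (intro Min_le) auto
  moreover have "dot m (\<lambda>j. y j / \<epsilon>) g = dot m y g / \<epsilon>" for g
    unfolding dot_def by (simp add: sum_divide_distrib)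
  ultimately show ?thesis using \<open>0 < \<epsilon>\<close> by (intro exI[of _ "\<lambda>j. y j / \<epsilon>"]) (simp add: le_divide_eq)
qed simp

theorem integral_gordan_alternative:
  assumes "finite G" and bound: "\<forall>g\<in>G. \<forall>j<m. \<bar>g j\<bar> \<le> R" and R: "1 \<le> R"
  shows "pos_dependent m G \<or>
    (\<exists>Y. (\<forall>g\<in>G. 1 \<le> (\<Sum>j<m. Y j * g j)) \<and> (\<forall>j<m. \<bar>Y j\<bar> \<le> separator_bound m R))"
proof -
  consider (separated) y where "\<forall>g\<in>G. 0 < dot m y g" | (dependent) "pos_dependent m G"
    using gordan_alternative[OF assms(1)] by blast
  then show ?thesis
  proof cases
    case separated
    then obtain y0 where "\<forall>g\<in>G. 1 \<le> dot m y0 g" using exists_dot_ge_one_if_pos[OF assms(1)] by blast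
    then obtain y ts where ts: "set ts \<subseteq> G" "lin_indep m ts" "\<forall>t\<in>set ts. dot m y t = 1"
      and feasible: "\<forall>g\<in>G. 1 \<le> dot m y g" and span: "\<forall>g\<in>G. in_span m ts g"
      using exists_tight_basis[OF assms(1)] by blast
    have "1 \<le> (\<Sum>j<m. adjugate_separator m ts j * g j)" if "g \<in> G" for g
      using adjugate_separator_ge_one[OF ts(2,3)] feasible span that by blast
    moreover have "\<bar>adjugate_separator m ts j\<bar> \<le> separator_bound m R" if "j < m" for j
      using adjugate_separator_bound[OF ts(2) _ R that] bound ts(1) by blast
    ultimately show ?thesis by blast
  qed simp
qed

lemma separator_bound_le:
  assumes m: "1 \<le> m" and \<Delta>: "1 \<le> \<Delta>"
  shows "separator_bound m (2 * \<Delta>) \<le> (2 * int m * \<Delta>) ^ (3 * m)"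
proof -
  define q where "q = 2 * int m * \<Delta>"
  have "int m \<le> q" "2 * \<Delta> \<le> q" "0 \<le> \<Delta>" using m \<Delta> by (simp_all add: q_def mult_le_cancel_left1)
  have "int (m * fact m) = int m * fact m" by simp
  also have "\<dots> \<le> int m * int m ^ m" using fact_le_power[of m, where 'a = int] by (intro mult_left_mono) auto
  also have "\<dots> = int m ^ (m + 1)" by simp
  also have "\<dots> \<le> q ^ (m + 1)" using \<open>int m \<le> q\<close> by (intro power_mono) auto
  finally have fact_le: "int (m * fact m) \<le> q ^ (m + 1)" .
  have "int m * (2 * \<Delta>)\<^sup>2 \<le> int m * int m * (2 * \<Delta>)\<^sup>2" using m by (intro mult_right_mono) auto
  also have "\<dots> = q\<^sup>2" by (simp add: q_def power2_eq_square algebra_simps)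
  finally have "(int m * (2 * \<Delta>)\<^sup>2) ^ (m - 1) \<le> (q\<^sup>2) ^ (m - 1)" by (intro power_mono) auto
  then have "separator_bound m (2 * \<Delta>) \<le> q ^ (m + 1) * q * (q\<^sup>2) ^ (m - 1)"
    unfolding separator_bound_def using fact_le \<open>2 * \<Delta> \<le> q\<close> \<open>0 \<le> \<Delta>\<close> by (intro mult_mono) auto
  also have "\<dots> = q ^ (3 * m)"
  proof -
    have "(m + 1) + 1 + 2 * (m - 1) = 3 * m" using m by simp
    then show ?thesis by (metis power_add power_mult power_one_right)
  qed
  finally show ?thesis by (simp add: q_def)
qed

section \<open>Unicolor exchanges in matroids\<close>

lemma sum_card_less_eq_sum:
  fixes g :: "'a \<Rightarrow> nat"
  assumes "finite X" and le: "\<And>x. x \<in> X \<Longrightarrow> g x \<le> n"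
  shows "(\<Sum>s<n. card {x\<in>X. s < g x}) = (\<Sum>x\<in>X. g x)"
proof -
  have "(\<Sum>s<n. card {x\<in>X. s < g x}) = (\<Sum>s<n. \<Sum>x\<in>X. if s < g x then 1 else 0)"
    using assms(1) by (simp only: card_eq_sum sum.inter_filter)
  also have "\<dots> = (\<Sum>x\<in>X. \<Sum>s<n. if s < g x then 1 else 0)" by (rule sum.swap)
  also have "\<dots> = (\<Sum>x\<in>X. card {s\<in>{..<n}. s < g x})"
    by (simp only: card_eq_sum sum.inter_filter finite_lessThan)
  also have "\<dots> = (\<Sum>x\<in>X. g x)"
  proof (rule sum.cong[OF refl])
    fix x assume "x \<in> X"
    then have "{s\<in>{..<n}. s < g x} = {..<g x}" using le[of x] by auto
    then show "card {s\<in>{..<n}. s < g x} = g x" by simp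
  qed
  finally show ?thesis .
qed

lemma potential_diff_le_l1norm:
  assumes Y: "\<forall>j<m. \<bar>Y j\<bar> \<le> Yb"
  shows "(\<Sum>a\<in>A. \<Sum>j<m. Y j * W a j) - (\<Sum>b\<in>B. \<Sum>j<m. Y j * W b j)
    \<le> Yb * l1norm m (\<lambda>j. wsum W A j - wsum W B j)"
proof -
  have "(\<Sum>a\<in>A. \<Sum>j<m. Y j * W a j) - (\<Sum>b\<in>B. \<Sum>j<m. Y j * W b j)
      = (\<Sum>j<m. Y j * (wsum W A j - wsum W B j))"
    unfolding wsum_def
    by (simp add: sum_distrib_left right_diff_distrib sum_subtractf sum.swap[of _ A] sum.swap[of _ B])
  also have "\<dots> \<le> (\<Sum>j<m. Yb * \<bar>wsum W A j - wsum W B j\<bar>)"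
  proof (rule sum_mono)
    fix j assume "j \<in> {..<m}"
    then have "\<bar>Y j\<bar> \<le> Yb" using Y by simp
    have "Y j * (wsum W A j - wsum W B j) \<le> \<bar>Y j\<bar> * \<bar>wsum W A j - wsum W B j\<bar>"
      by (metis abs_ge_self abs_mult)
    also have "\<dots> \<le> Yb * \<bar>wsum W A j - wsum W B j\<bar>" using \<open>\<bar>Y j\<bar> \<le> Yb\<close> by (intro mult_right_mono) auto
    finally show "Y j * (wsum W A j - wsum W B j) \<le> Yb * \<bar>wsum W A j - wsum W B j\<bar>" .
  qed
  also have "\<dots> = Yb * l1norm m (\<lambda>j. wsum W A j - wsum W B j)" by (simp add: l1norm_def sum_distrib_left)
  finally show ?thesis .
qed

lemma colours_sq_le:
  assumes m: "1 \<le> m" and \<Delta>: "1 \<le> \<Delta>"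
  shows "int (nat (2 * \<Delta> + 1) ^ m) ^ 2 \<le> (2 * int m * \<Delta>) ^ (4 * m)"
proof -
  define q where "q = 2 * int m * \<Delta>"
  have "2 * \<Delta> + 1 \<le> 2 * \<Delta> * 2" using \<Delta> by simp
  also have "\<dots> \<le> 2 * \<Delta> * (2 * \<Delta>)" using \<Delta> by (intro mult_left_mono) auto
  also have "\<dots> \<le> q * q" using m \<Delta> by (intro mult_mono) (auto simp: q_def)
  finally have "(2 * \<Delta> + 1) ^ m \<le> (q * q) ^ m" using \<Delta> by (intro power_mono) auto
  moreover have "int (nat (2 * \<Delta> + 1) ^ m) = (2 * \<Delta> + 1) ^ m" using \<Delta> by simp
  ultimately have "int (nat (2 * \<Delta> + 1) ^ m) ^ 2 \<le> ((q * q) ^ m) ^ 2" using \<Delta> by (intro power_mono) auto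
  also have "\<dots> = q ^ (4 * m)" by (simp flip: power_mult power_mult_distrib) (simp add: power_mult algebra_simps)
  finally show ?thesis by (simp add: q_def)
qed

lemma exchange_constant_le:
  assumes m: "1 \<le> m" and \<Delta>: "1 \<le> \<Delta>" and "0 \<le> Yb" and Yb: "Yb \<le> (2 * int m * \<Delta>) ^ (3 * m)"
  shows "(2 * (int m * Yb * \<Delta>) + 1) * int (nat (2 * \<Delta> + 1) ^ m) ^ 2 \<le> (2 * int m * \<Delta>) ^ (10 * m)"
proof -
  define q where "q = 2 * int m * \<Delta>"
  define P where "P = q ^ (3 * m)"
  have "1 * 1 \<le> int m * \<Delta>" using m \<Delta> by (intro mult_mono) auto
  then have "2 \<le> q" by (simp add: q_def)
  then have "1 \<le> P" by (simp add: P_def)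
  have "1 * P \<le> q * P" "2 * (q * P) \<le> q * (q * P)"
    using \<open>2 \<le> q\<close> \<open>1 \<le> P\<close> by (intro mult_right_mono; simp)+
  moreover have "0 \<le> q" using \<open>2 \<le> q\<close> by simp
  then have "q * Yb \<le> q * P" by (rule mult_left_mono[rotated]) (use Yb in \<open>simp add: P_def q_def\<close>)
  moreover have "2 * (int m * Yb * \<Delta>) + 1 = q * Yb + 1" by (simp add: q_def algebra_simps)
  ultimately have "2 * (int m * Yb * \<Delta>) + 1 \<le> q * (q * P)" using \<open>1 \<le> P\<close> by linarith
  also have "\<dots> = q ^ (3 * m + 2)" by (simp add: P_def power_add power2_eq_square)
  finally have "(2 * (int m * Yb * \<Delta>) + 1) * int (nat (2 * \<Delta> + 1) ^ m) ^ 2 \<le> q ^ (3 * m + 2) * q ^ (4 * m)"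
    using colours_sq_le[OF m \<Delta>] unfolding q_def[symmetric]
    by (rule mult_mono) (simp_all add: \<open>0 \<le> q\<close>)
  also have "\<dots> \<le> q ^ (10 * m)"
    unfolding power_add[symmetric] using m \<open>2 \<le> q\<close> by (intro power_increasing) auto
  finally show ?thesis by (simp add: q_def)
qed

lemma le_exchange_constant:
  assumes m: "1 \<le> m" and \<Delta>: "1 \<le> \<Delta>" and "0 \<le> Yb"
  shows "Yb \<le> (2 * (int m * Yb * \<Delta>) + 1) * int (nat (2 * \<Delta> + 1) ^ m) ^ 2"
proof -
  have "1 * 1 \<le> int m * \<Delta>" using m \<Delta> by (intro mult_mono) auto
  then have "Yb * 1 \<le> Yb * (int m * \<Delta>)" using \<open>0 \<le> Yb\<close> by (intro mult_left_mono) auto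
  then have "Yb \<le> int m * Yb * \<Delta>" by (simp add: algebra_simps)
  moreover have "0 \<le> int m * Yb * \<Delta>" using \<open>0 \<le> Yb\<close> \<Delta> by simp
  ultimately have "Yb \<le> 2 * (int m * Yb * \<Delta>) + 1" by linarith
  also have "\<dots> = (2 * (int m * Yb * \<Delta>) + 1) * 1" by simp
  also have "\<dots> \<le> (2 * (int m * Yb * \<Delta>) + 1) * int (nat (2 * \<Delta> + 1) ^ m) ^ 2"
    using \<open>0 \<le> Yb\<close> \<Delta> \<open>1 * 1 \<le> int m * \<Delta>\<close> by (intro mult_left_mono) auto
  finally show ?thesis .
qed

locale indep_matroid =
  fixes E :: "'a set" and indep :: "'a set \<Rightarrow> bool"
  assumes matroid: "matroid E indep"
begin

lemma indep_subset_carrier: "indep X \<Longrightarrow> X \<subseteq> E"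
  using matroid unfolding matroid_def by blast

lemma indep_finite: "indep X \<Longrightarrow> finite X"
  using matroid unfolding matroid_def by (meson finite_subset)

lemma indep_subset: "indep X \<Longrightarrow> Y \<subseteq> X \<Longrightarrow> indep Y"
  using matroid unfolding matroid_def by blast

lemma indep_exchange: "indep X \<Longrightarrow> indep Y \<Longrightarrow> card X < card Y \<Longrightarrow> \<exists>y\<in>Y - X. indep (insert y X)"
  using matroid unfolding matroid_def by blast

lemma indep_augment:
  assumes X: "indep X" and Y: "indep Y" and "card X \<le> n" "n \<le> card Y"
  shows "\<exists>Z. Z \<subseteq> Y - X \<and> card Z = n - card X \<and> indep (X \<union> Z)"
  using assms(1,3)
proof (induction "n - card X" arbitrary: X)
  case 0
  then show ?case by (intro exI[of _ "{}"]) auto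
next
  case (Suc d)
  then have "card X < card Y" using \<open>n \<le> card Y\<close> by linarith
  then obtain y where y: "y \<in> Y - X" "indep (insert y X)" using indep_exchange[OF Suc.prems(1) Y] by blast
  have card_yX: "card (insert y X) = Suc (card X)" using y indep_finite[OF Suc.prems(1)] by simp
  have "d = n - card (insert y X)" "card (insert y X) \<le> n" using Suc.hyps(2) card_yX by simp_all
  then obtain Z where Z: "Z \<subseteq> Y - insert y X" "card Z = n - card (insert y X)" "indep (insert y X \<union> Z)"
    using Suc.hyps(1) y(2) by blast
  have "card (insert y Z) = Suc (card Z)" using Z(1) indep_finite[OF Z(3)] by (subst card_insert_disjoint) auto
  moreover have "X \<union> insert y Z = insert y X \<union> Z" by auto
  ultimately show ?case using Z y card_yX Suc.hyps(2) by (intro exI[of _ "insert y Z"]) auto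
qed

end

locale matroid_exchange = indep_matroid E indep
  for E :: "'a set" and indep :: "'a set \<Rightarrow> bool" +
  fixes m :: nat and \<Delta> :: int and W :: "'a \<Rightarrow> nat \<Rightarrow> int" and A B :: "'a set" and k :: nat
  assumes weight_bound: "\<forall>e\<in>E. \<forall>j<m. - \<Delta> \<le> W e j \<and> W e j \<le> \<Delta>" and \<Delta>_nonneg: "0 \<le> \<Delta>"
    and indep_A: "indep A" and indep_B: "indep B" and disjoint: "A \<inter> B = {}"
    and card_A: "card A = k" and card_B: "card B = k"
begin

abbreviation colours :: nat where
  "colours \<equiv> nat (2 * \<Delta> + 1) ^ m"

definition unicolor_exchange :: "real \<Rightarrow> 'a set \<Rightarrow> 'a set \<Rightarrow> bool" where
  "unicolor_exchange \<tau> A' B' \<longleftrightarrow> A' \<subseteq> A \<and> B' \<subseteq> B \<and> unicolor m W A' \<and> unicolor m W B' \<and>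
     indep ((A - A') \<union> B') \<and> card A' = card B' \<and> \<tau> \<le> real (card A')"

lemma A_subset: "A \<subseteq> E" and B_subset: "B \<subseteq> E" and finite_A: "finite A" and finite_B: "finite B"
  using indep_A indep_B indep_subset_carrier indep_finite by auto

lemma exists_unicolor_subset:
  assumes "S \<subseteq> E" "finite S"
  shows "\<exists>S'\<subseteq>S. unicolor m W S' \<and> card S \<le> colours * card S'"
proof (cases "S = {}")
  case False
  define colour where "colour = (\<lambda>e. restrict (W e) {..<m})"
  define C where "C = (\<Pi>\<^sub>E j\<in>{..<m}. {- \<Delta>..\<Delta>})"
  have "colour e \<in> C" if "e \<in> S" for e
    unfolding colour_def C_def restrict_PiE using that assms(1) weight_bound by (auto simp: Pi_iff)
  then have "colour \<in> S \<rightarrow> C" by (rule funcsetI)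
  moreover have "C \<noteq> {}" using False \<open>colour \<in> S \<rightarrow> C\<close> by blast
  moreover have "finite C" "card C = colours" by (simp_all add: C_def card_PiE finite_PiE)
  ultimately obtain c where "card S \<le> card (colour -` {c} \<inter> S) * colours"
    using pigeonhole_card[of colour S C] \<open>finite S\<close> by auto
  moreover have "unicolor m W (colour -` {c} \<inter> S)"
    unfolding unicolor_def colour_def by (metis IntD1 lessThan_iff restrict_apply' vimage_singleton_eq)
  ultimately show ?thesis by (intro exI[of _ "colour -` {c} \<inter> S"]) (auto simp: mult.commute)
qed (auto simp: unicolor_def)

lemma exists_unicolor_subexchange:
  assumes R: "R \<subseteq> A" and B2: "B2 \<subseteq> B" and card_eq: "card R = card B2"
    and indep_RB2: "indep ((A - R) \<union> B2)"
  shows "\<exists>A3 B3. A3 \<subseteq> R \<and> B3 \<subseteq> B2 \<and> unicolor m W A3 \<and> indep ((A - A3) \<union> B3) \<and>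
    card A3 = card B3 \<and> card R \<le> colours * card A3"
proof -
  have "finite R" using R finite_A finite_subset by blast
  then obtain A3 where A3: "A3 \<subseteq> R" "unicolor m W A3" "card R \<le> colours * card A3"
    using exists_unicolor_subset[of R] R A_subset by blast
  have "finite A3" using A3(1) \<open>finite R\<close> finite_subset by blast
  have card_A3: "card (A - A3) = k - card A3"
    using A3(1) R \<open>finite A3\<close> card_A by (subst card_Diff_subset) auto
  have "card (A - R) = k - card R" using R \<open>finite R\<close> card_A by (subst card_Diff_subset) auto
  moreover have "(A - R) \<inter> B2 = {}" using B2 disjoint by blast
  moreover have "card R \<le> k" using R finite_A card_A card_mono by blast
  ultimately have "card ((A - R) \<union> B2) = k"
    using finite_A finite_B B2 finite_subset card_eq by (subst card_Un_disjoint) auto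
  moreover have "indep (A - A3)" using indep_A indep_subset by blast
  ultimately obtain B3 where B3: "B3 \<subseteq> ((A - R) \<union> B2) - (A - A3)" "card B3 = k - card (A - A3)"
      "indep ((A - A3) \<union> B3)"
    using indep_augment[OF _ indep_RB2, of "A - A3" k] card_A3 by auto
  have "card A3 \<le> k" using A3(1) R finite_A card_A card_mono by (meson order_trans)
  then show ?thesis using A3 B3 card_A3 by (intro exI[of _ A3] exI[of _ B3]) auto
qed

lemma exists_unicolor_half_exchange:
  assumes A_up: "A_up \<subseteq> A" and B_up: "B_up \<subseteq> B" and le: "card A_up \<le> card B_up"
  shows "\<exists>R B2. R \<subseteq> A - A_up \<and> B2 \<subseteq> B_up \<and> unicolor m W B2 \<and> card R = card B2 \<and>
    indep ((A - R) \<union> B2) \<and> card B_up - card A_up \<le> colours * card B2"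
proof -
  have indep_A_up: "indep A_up" and indep_B_up: "indep B_up"
    using A_up B_up indep_A indep_B indep_subset by blast+
  have "finite A_up" "finite B_up" using indep_A_up indep_B_up indep_finite by blast+
  obtain B1 where B1: "B1 \<subseteq> B_up - A_up" "card B1 = card B_up - card A_up" "indep (A_up \<union> B1)"
    using indep_augment[OF indep_A_up indep_B_up le] by blast
  have "finite B1" using B1(1) \<open>finite B_up\<close> finite_subset by blast
  then obtain B2 where B2: "B2 \<subseteq> B1" "unicolor m W B2" "card B1 \<le> colours * card B2"
    using exists_unicolor_subset[of B1] B1(1) B_up B_subset by blast
  have "finite B2" using B2(1) \<open>finite B1\<close> finite_subset by blast
  have indep_AB2: "indep (A_up \<union> B2)" using B1(3) B2(1) indep_subset by blast
  have card_AB2: "card (A_up \<union> B2) = card A_up + card B2"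
    using \<open>finite A_up\<close> \<open>finite B2\<close> B1(1) B2(1) by (subst card_Un_disjoint) auto
  have "card B2 \<le> card B1" using B2(1) \<open>finite B1\<close> card_mono by blast
  moreover have "card B_up \<le> k" using B_up finite_B card_B card_mono by blast
  ultimately have "card (A_up \<union> B2) \<le> k" using card_AB2 B1(2) le by linarith
  then obtain Z where Z: "Z \<subseteq> A - (A_up \<union> B2)" "card Z = k - card (A_up \<union> B2)" "indep ((A_up \<union> B2) \<union> Z)"
    using indep_augment[OF indep_AB2 indep_A, of k] card_A by auto
  define R where "R = (A - A_up) - Z"
  have "finite Z" using Z(1) finite_A finite_subset by blast
  have "card (A - A_up) = k - card A_up" using A_up \<open>finite A_up\<close> card_A by (subst card_Diff_subset) auto
  then have "card R = card B2"
    unfolding R_def using Z(1,2) card_AB2 \<open>card (A_up \<union> B2) \<le> k\<close> \<open>finite Z\<close>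
    by (subst card_Diff_subset) auto
  moreover have "A - R = A_up \<union> Z" unfolding R_def using A_up Z(1) by blast
  then have "indep ((A - R) \<union> B2)" using Z(3) by (simp add: Un_ac)
  moreover have "R \<subseteq> A - A_up" unfolding R_def by blast
  moreover have "B2 \<subseteq> B_up" using B1(1) B2(1) by blast
  moreover have "card B_up - card A_up \<le> colours * card B2" using B1(2) B2(3) by simp
  ultimately show ?thesis using B2(2) by blast
qed

text \<open>Two pigeonhole steps, each losing a factor \<open>colours\<close>: a unicolor part \<open>B2\<close> of an
  augmentation of \<open>A_up\<close> from \<open>B_up\<close>, then a unicolor part of the elements of \<open>A\<close> it displaces.\<close>
lemma card_lt_if_no_unicolor_exchange:
  assumes A_up: "A_up \<subseteq> A" and B_up: "B_up \<subseteq> B" and \<tau>: "0 < \<tau>"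
    and none: "\<And>A' B'. A' \<subseteq> A - A_up \<Longrightarrow> B' \<subseteq> B_up \<Longrightarrow> \<not> unicolor_exchange \<tau> A' B'"
  shows "real (card B_up) < real (card A_up) + real colours ^ 2 * \<tau>"
proof (rule ccontr)
  let ?N = "real colours"
  assume "\<not> ?thesis"
  then have big: "real (card A_up) + ?N ^ 2 * \<tau> \<le> real (card B_up)" by simp
  have "1 \<le> ?N" using \<Delta>_nonneg by simp
  then have N2: "0 < ?N ^ 2" by (intro zero_less_power) linarith
  then have "0 < ?N ^ 2 * \<tau>" using \<tau> by (rule mult_pos_pos)
  then have "real (card A_up) \<le> real (card B_up)" using big by linarith
  then have "card A_up \<le> card B_up" by simp
  then obtain R B2 where RB2: "R \<subseteq> A - A_up" "B2 \<subseteq> B_up" "unicolor m W B2" "card R = card B2"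
      "indep ((A - R) \<union> B2)" and half: "card B_up - card A_up \<le> colours * card B2"
    using exists_unicolor_half_exchange[OF A_up B_up] by blast
  then obtain A3 B3 where A3B3: "A3 \<subseteq> R" "B3 \<subseteq> B2" "unicolor m W A3" "indep ((A - A3) \<union> B3)"
      "card A3 = card B3" and sub: "card R \<le> colours * card A3"
    using exists_unicolor_subexchange[of R B2] B_up by blast
  have "real (card B2) \<le> ?N * real (card A3)" using sub RB2(4) by (metis of_nat_le_iff of_nat_mult)
  then have "?N * real (card B2) \<le> ?N * (?N * real (card A3))"
    using \<open>1 \<le> ?N\<close> by (intro mult_left_mono) auto
  moreover have "?N ^ 2 * \<tau> \<le> real (card B_up - card A_up)"
    using big \<open>card A_up \<le> card B_up\<close> by simp
  moreover have "real (card B_up - card A_up) \<le> ?N * real (card B2)" using half by (metis of_nat_le_iff of_nat_mult)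
  ultimately have "?N ^ 2 * \<tau> \<le> ?N ^ 2 * real (card A3)" by (simp add: power2_eq_square mult.assoc)
  then have "\<tau> \<le> real (card A3)" using mult_le_cancel_left_pos[OF N2] by blast
  moreover have "unicolor m W B3" using RB2(3) A3B3(2) unfolding unicolor_def by blast
  ultimately have "unicolor_exchange \<tau> A3 B3"
    unfolding unicolor_exchange_def using A3B3 RB2 A_up B_up by blast
  then show False using none A3B3(1,2) RB2(1,2) by blast
qed

lemma card_level_lt:
  fixes g :: "'a \<Rightarrow> nat"
  assumes \<tau>: "0 < \<tau>"
    and decreasing: "\<And>A' B' a b. unicolor_exchange \<tau> A' B' \<Longrightarrow> a \<in> A' \<Longrightarrow> b \<in> B' \<Longrightarrow> g b < g a"
  shows "real (card {b\<in>B. s < Suc (g b)}) < real (card {a\<in>A. s < g a}) + real colours ^ 2 * \<tau>"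
proof (rule card_lt_if_no_unicolor_exchange)
  fix A' B' assume A': "A' \<subseteq> A - {a\<in>A. s < g a}" and B': "B' \<subseteq> {b\<in>B. s < Suc (g b)}"
  show "\<not> unicolor_exchange \<tau> A' B'"
  proof
    assume ex: "unicolor_exchange \<tau> A' B'"
    then have "card A' \<noteq> 0" "card B' \<noteq> 0" using \<tau> by (auto simp: unicolor_exchange_def)
    then obtain a b where ab: "a \<in> A'" "b \<in> B'" by (metis all_not_in_conv card.empty)
    then have "\<not> s < g a" "s < Suc (g b)" using A' B' by auto
    with decreasing[OF ex ab] show False by simp
  qed
qed (use \<tau> in auto)

text \<open>Layer \<open>A\<close> and \<open>B\<close> by the values of \<open>g\<close>: comparing the \<open>B\<close>-elements of level \<open>\<ge> s\<close> with the
  \<open>A\<close>-elements of level \<open>> s\<close> by the exchange lemma and summing over all \<open>T\<close> levels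
  bounds \<open>k\<close> by the difference of the total potentials.\<close>
lemma card_lt_by_levels:
  fixes g :: "'a \<Rightarrow> nat"
  assumes \<tau>: "0 < \<tau>" and "0 < T" and g_less: "\<And>e. e \<in> E \<Longrightarrow> g e < T"
    and decreasing: "\<And>A' B' a b. unicolor_exchange \<tau> A' B' \<Longrightarrow> a \<in> A' \<Longrightarrow> b \<in> B' \<Longrightarrow> g b < g a"
  shows "real k + (\<Sum>b\<in>B. real (g b)) < (\<Sum>a\<in>A. real (g a)) + real T * real colours ^ 2 * \<tau>"
proof -
  have B_levels: "(\<Sum>s<T. card {b\<in>B. s < Suc (g b)}) = (\<Sum>b\<in>B. Suc (g b))"
    using finite_B B_subset g_less by (intro sum_card_less_eq_sum) (auto simp: Suc_le_eq)
  have A_levels: "(\<Sum>s<T. card {a\<in>A. s < g a}) = (\<Sum>a\<in>A. g a)"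
    using finite_A A_subset g_less by (intro sum_card_less_eq_sum) (auto intro: less_imp_le)
  have "real k + (\<Sum>b\<in>B. real (g b)) = real (\<Sum>s<T. card {b\<in>B. s < Suc (g b)})"
    unfolding B_levels using card_B by (simp add: sum.distrib)
  also have "\<dots> = (\<Sum>s<T. real (card {b\<in>B. s < Suc (g b)}))" by simp
  also have "\<dots> < (\<Sum>s<T. real (card {a\<in>A. s < g a}) + real colours ^ 2 * \<tau>)"
    using card_level_lt[OF \<tau> decreasing] \<open>0 < T\<close> by (intro sum_strict_mono) auto
  also have "\<dots> = real (\<Sum>s<T. card {a\<in>A. s < g a}) + real T * real colours ^ 2 * \<tau>"
    by (simp add: sum.distrib)
  also note A_levels
  finally show ?thesis by simp
qed

lemma card_lt_by_potential:
  fixes f :: "'a \<Rightarrow> int" and F :: int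
  assumes \<tau>: "0 < \<tau>" and "0 \<le> F" and f_bound: "\<And>e. e \<in> E \<Longrightarrow> \<bar>f e\<bar> \<le> F"
    and decreasing: "\<And>A' B' a b. unicolor_exchange \<tau> A' B' \<Longrightarrow> a \<in> A' \<Longrightarrow> b \<in> B' \<Longrightarrow> f b < f a"
  shows "real k < real_of_int (2 * F + 1) * real colours ^ 2 * \<tau> + real_of_int ((\<Sum>a\<in>A. f a) - (\<Sum>b\<in>B. f b))"
proof -
  define g where "g e = nat (f e + F)" for e
  have g_real: "real (g e) = real_of_int (f e) + real_of_int F" if "e \<in> E" for e
    using f_bound[OF that] by (simp add: g_def)
  have "g b < g a" if "unicolor_exchange \<tau> A' B'" "a \<in> A'" "b \<in> B'" for A' B' a b
  proof -
    have "a \<in> E" "b \<in> E" using that A_subset B_subset unfolding unicolor_exchange_def by auto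
    then show ?thesis using decreasing[OF that] f_bound[of a] f_bound[of b] by (simp add: g_def)
  qed
  moreover have "g e < nat (2 * F) + 1" if "e \<in> E" for e using f_bound[OF that] by (simp add: g_def)
  ultimately have "real k + (\<Sum>b\<in>B. real (g b)) < (\<Sum>a\<in>A. real (g a)) + real (nat (2 * F) + 1) * real colours ^ 2 * \<tau>"
    by (intro card_lt_by_levels[OF \<tau>]) auto
  also have "real (nat (2 * F) + 1) = real_of_int (2 * F + 1)" using \<open>0 \<le> F\<close> by simp
  finally show ?thesis
    using g_real A_subset B_subset card_A card_B by (simp add: subset_iff sum.distrib algebra_simps)
qed

lemma card_lt_if_integral_separator:
  assumes \<tau>: "0 < \<tau>" and Y: "\<forall>j<m. \<bar>Y j\<bar> \<le> Yb" and "0 \<le> Yb"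
    and sep: "\<And>A' B' a b. unicolor_exchange \<tau> A' B' \<Longrightarrow> a \<in> A' \<Longrightarrow> b \<in> B' \<Longrightarrow>
      1 \<le> (\<Sum>j<m. Y j * (W a j - W b j))"
  shows "real k < real_of_int (2 * (int m * Yb * \<Delta>) + 1) * real colours ^ 2 * \<tau>
    + real_of_int (Yb * l1norm m (\<lambda>j. wsum W A j - wsum W B j))"
proof -
  define f where "f e = (\<Sum>j<m. Y j * W e j)" for e
  have "\<bar>f e\<bar> \<le> int m * Yb * \<Delta>" if "e \<in> E" for e
  proof -
    have "\<bar>f e\<bar> \<le> (\<Sum>j<m. \<bar>Y j * W e j\<bar>)" unfolding f_def by (rule sum_abs)
    also have "\<dots> \<le> (\<Sum>j<m. Yb * \<Delta>)"
    proof (rule sum_mono)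
      fix j assume "j \<in> {..<m}"
      then have "\<bar>Y j\<bar> \<le> Yb" "- \<Delta> \<le> W e j \<and> W e j \<le> \<Delta>" using Y weight_bound that by simp_all
      then have "\<bar>Y j\<bar> \<le> Yb" "\<bar>W e j\<bar> \<le> \<Delta>" by (simp_all add: abs_le_iff)
      then show "\<bar>Y j * W e j\<bar> \<le> Yb * \<Delta>" unfolding abs_mult using \<open>0 \<le> Yb\<close> by (intro mult_mono) auto
    qed
    finally show ?thesis by simp
  qed
  moreover have "f b < f a" if "unicolor_exchange \<tau> A' B'" "a \<in> A'" "b \<in> B'" for A' B' a b
    using sep[OF that] by (simp add: f_def right_diff_distrib sum_subtractf)
  moreover have "0 \<le> int m * Yb * \<Delta>" using \<open>0 \<le> Yb\<close> \<Delta>_nonneg by simp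
  ultimately have "real k < real_of_int (2 * (int m * Yb * \<Delta>) + 1) * real colours ^ 2 * \<tau>
      + real_of_int ((\<Sum>a\<in>A. f a) - (\<Sum>b\<in>B. f b))"
    using card_lt_by_potential[OF \<tau>] by blast
  moreover have "(\<Sum>a\<in>A. f a) - (\<Sum>b\<in>B. f b) \<le> Yb * l1norm m (\<lambda>j. wsum W A j - wsum W B j)"
    unfolding f_def using Y by (rule potential_diff_le_l1norm)
  then have "real_of_int ((\<Sum>a\<in>A. f a) - (\<Sum>b\<in>B. f b)) \<le> real_of_int (Yb * l1norm m (\<lambda>j. wsum W A j - wsum W B j))"
    by (simp only: of_int_le_iff)
  ultimately show ?thesis by linarith
qed

text \<open>Coordinates from \<open>m\<close> on are set to \<open>0\<close>, so that every difference vector is determined by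
  its first \<open>m\<close> coordinates.\<close>
definition exchange_differences :: "real \<Rightarrow> (nat \<Rightarrow> int) set" where
  "exchange_differences \<tau> = {(\<lambda>j. if j < m then W a j - W b j else 0) | a b.
     \<exists>A' B'. unicolor_exchange \<tau> A' B' \<and> a \<in> A' \<and> b \<in> B'}"

lemma finite_exchange_differences: "finite (exchange_differences \<tau>)"
proof (rule finite_subset)
  show "exchange_differences \<tau> \<subseteq> (\<lambda>(a, b) j. if j < m then W a j - W b j else 0) ` (A \<times> B)"
    unfolding exchange_differences_def unicolor_exchange_def by force
qed (simp add: finite_A finite_B)

lemma exchange_differences_bound: "\<forall>g\<in>exchange_differences \<tau>. \<forall>j<m. \<bar>g j\<bar> \<le> 2 * \<Delta>"
proof (intro ballI allI impI)
  fix g j assume "g \<in> exchange_differences \<tau>" "j < m"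
  then obtain a b where "a \<in> A" "b \<in> B" "g = (\<lambda>j. if j < m then W a j - W b j else 0)"
    unfolding exchange_differences_def unicolor_exchange_def by blast
  moreover have "a \<in> E" "b \<in> E" using \<open>a \<in> A\<close> \<open>b \<in> B\<close> A_subset B_subset by auto
  ultimately have "- \<Delta> \<le> W a j \<and> W a j \<le> \<Delta>" "- \<Delta> \<le> W b j \<and> W b j \<le> \<Delta>"
    using weight_bound \<open>j < m\<close> by simp_all
  then show "\<bar>g j\<bar> \<le> 2 * \<Delta>" using \<open>g = _\<close> \<open>j < m\<close> by (simp add: abs_le_iff)
qed

lemma exchange_differences_witness:
  assumes "g \<in> exchange_differences \<tau>"
  shows "\<exists>A' B'. unicolor_exchange \<tau> A' B' \<and> (\<forall>a\<in>A'. \<forall>b\<in>B'. \<forall>j<m. g j = W a j - W b j)"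
proof -
  obtain A' B' a0 b0 where "unicolor_exchange \<tau> A' B'" "a0 \<in> A'" "b0 \<in> B'"
    and g: "g = (\<lambda>j. if j < m then W a0 j - W b0 j else 0)"
    using assms unfolding exchange_differences_def by blast
  have "g j = W a j - W b j" if "a \<in> A'" "b \<in> B'" "j < m" for a b j
  proof -
    have "unicolor m W A'" "unicolor m W B'"
      using \<open>unicolor_exchange \<tau> A' B'\<close> unfolding unicolor_exchange_def by simp_all
    then have "W a j = W a0 j" "W b j = W b0 j"
      using that \<open>a0 \<in> A'\<close> \<open>b0 \<in> B'\<close> unfolding unicolor_def by blast+
    then show ?thesis using g \<open>j < m\<close> by simp
  qed
  then show ?thesis using \<open>unicolor_exchange \<tau> A' B'\<close> by blast
qed

lemma separates_exchange:
  assumes sep: "\<forall>g\<in>exchange_differences \<tau>. 1 \<le> (\<Sum>j<m. Y j * g j)"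
    and "unicolor_exchange \<tau> A' B'" "a \<in> A'" "b \<in> B'"
  shows "1 \<le> (\<Sum>j<m. Y j * (W a j - W b j))"
proof -
  have "(\<lambda>j. if j < m then W a j - W b j else 0) \<in> exchange_differences \<tau>"
    unfolding exchange_differences_def using assms(2-4) by blast
  moreover have "(\<Sum>j<m. Y j * (if j < m then W a j - W b j else 0)) = (\<Sum>j<m. Y j * (W a j - W b j))"
    by (intro sum.cong) auto
  ultimately show ?thesis using sep by fastforce
qed

lemma no_integral_separator:
  assumes m: "0 < m" and \<Delta>: "0 < \<Delta>"
    and \<tau>_def: "\<tau> = real k / (2 * real m * real_of_int \<Delta>) ^ (10 * m)
                   - real_of_int (l1norm m (\<lambda>j. wsum W A j - wsum W B j))"
    and \<tau>: "0 < \<tau>" and Y: "\<forall>j<m. \<bar>Y j\<bar> \<le> separator_bound m (2 * \<Delta>)"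
    and sep: "\<forall>g\<in>exchange_differences \<tau>. 1 \<le> (\<Sum>j<m. Y j * g j)"
  shows False
proof -
  define Yb where "Yb = separator_bound m (2 * \<Delta>)"
  define \<mu> where "\<mu> = real_of_int (l1norm m (\<lambda>j. wsum W A j - wsum W B j))"
  define X where "X = real_of_int (2 * (int m * Yb * \<Delta>) + 1) * real colours ^ 2"
  define D where "D = (2 * real m * real_of_int \<Delta>) ^ (10 * m)"
  have "0 \<le> Yb" using \<Delta> by (simp add: Yb_def separator_bound_def)
  have "0 < D" "0 \<le> \<mu>" using m \<Delta> by (simp_all add: D_def \<mu>_def l1norm_def sum_nonneg)
  have "Yb \<le> (2 * int m * \<Delta>) ^ (3 * m)" using m \<Delta> separator_bound_le by (simp add: Yb_def)
  then have "real_of_int ((2 * (int m * Yb * \<Delta>) + 1) * int colours ^ 2)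
      \<le> real_of_int ((2 * int m * \<Delta>) ^ (10 * m))"
    using exchange_constant_le[of m \<Delta> Yb] m \<Delta> \<open>0 \<le> Yb\<close> by (simp only: of_int_le_iff)
  then have "X \<le> D" unfolding X_def D_def
    by (simp only: of_int_mult of_int_power of_int_of_nat_eq of_int_add of_int_1 of_int_numeral)
  have "real_of_int Yb \<le> real_of_int ((2 * (int m * Yb * \<Delta>) + 1) * int colours ^ 2)"
    using le_exchange_constant[of m \<Delta> Yb] m \<Delta> \<open>0 \<le> Yb\<close> by (simp only: of_int_le_iff)
  then have "real_of_int Yb \<le> X" unfolding X_def by (simp only: of_int_mult of_int_power of_int_of_nat_eq)
  have "real k < X * \<tau> + real_of_int (Yb * l1norm m (\<lambda>j. wsum W A j - wsum W B j))"
    unfolding X_def using Y \<open>0 \<le> Yb\<close> separates_exchange[OF sep] unfolding Yb_def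
    by (rule card_lt_if_integral_separator[OF \<tau>])
  also have "real_of_int (Yb * l1norm m (\<lambda>j. wsum W A j - wsum W B j)) = real_of_int Yb * \<mu>"
    by (simp add: \<mu>_def)
  also have "real_of_int Yb * \<mu> \<le> X * \<mu>" using \<open>real_of_int Yb \<le> X\<close> \<open>0 \<le> \<mu>\<close> by (rule mult_right_mono)
  also have "X * \<tau> + X * \<mu> = X / D * real k" unfolding \<tau>_def D_def[symmetric] \<mu>_def[symmetric]
    by (simp add: algebra_simps)
  also have "X / D * real k \<le> 1 * real k" using \<open>X \<le> D\<close> \<open>0 < D\<close> by (intro mult_right_mono) simp_all
  finally show False by simp
qed

lemma exchanges_with_cone:
  assumes "pos_dependent m (exchange_differences \<tau>)"
  shows "\<exists>l As Bs \<delta>. (\<forall>i\<le>l. unicolor_exchange \<tau> (As i) (Bs i) \<and>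
    (\<forall>a\<in>As i. \<forall>b\<in>Bs i. \<forall>j<m. \<delta> i j = W a j - W b j)) \<and> in_cone m (\<lambda>j. - \<delta> 0 j) {1..l} \<delta>"
proof -
  obtain l \<delta> where \<delta>: "\<forall>i\<le>l. \<delta> i \<in> exchange_differences \<tau>" "in_cone m (\<lambda>j. - \<delta> 0 j) {1..l} \<delta>"
    using in_cone_if_pos_dependent[OF finite_exchange_differences assms] by blast
  then have "\<forall>i. \<exists>P. i \<le> l \<longrightarrow> unicolor_exchange \<tau> (fst P) (snd P) \<and>
      (\<forall>a\<in>fst P. \<forall>b\<in>snd P. \<forall>j<m. \<delta> i j = W a j - W b j)"
    using exchange_differences_witness by fastforce
  then obtain P where "\<forall>i\<le>l. unicolor_exchange \<tau> (fst (P i)) (snd (P i)) \<and>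
      (\<forall>a\<in>fst (P i). \<forall>b\<in>snd (P i). \<forall>j<m. \<delta> i j = W a j - W b j)"
    by metis
  then show ?thesis using \<delta>(2) by (intro exI[of _ l] exI[of _ "fst \<circ> P"] exI[of _ "snd \<circ> P"] exI[of _ \<delta>]) auto
qed

lemma unicolor_exchange_empty: "\<tau> \<le> 0 \<Longrightarrow> unicolor_exchange \<tau> {} {}"
  using indep_A by (simp add: unicolor_exchange_def unicolor_def)

lemma exists_unicolor_exchanges_with_cone:
  assumes m: "0 < m" and \<Delta>: "0 < \<Delta>"
    and \<tau>_def: "\<tau> = real k / (2 * real m * real_of_int \<Delta>) ^ (10 * m)
                   - real_of_int (l1norm m (\<lambda>j. wsum W A j - wsum W B j))"
  shows "\<exists>l As Bs \<delta>. (\<forall>i\<le>l. unicolor_exchange \<tau> (As i) (Bs i) \<and>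
    (\<forall>a\<in>As i. \<forall>b\<in>Bs i. \<forall>j<m. \<delta> i j = W a j - W b j)) \<and> in_cone m (\<lambda>j. - \<delta> 0 j) {1..l} \<delta>"
proof (cases "\<tau> \<le> 0")
  case True
  then show ?thesis using unicolor_exchange_empty
    by (intro exI[of _ 0] exI[of _ "\<lambda>_. {}"] exI[of _ "\<lambda>_. {}"] exI[of _ "\<lambda>_ _. 0"]) (simp add: in_cone_def)
next
  case False
  from integral_gordan_alternative[OF finite_exchange_differences exchange_differences_bound]
  consider "pos_dependent m (exchange_differences \<tau>)"
    | Y where "\<forall>g\<in>exchange_differences \<tau>. 1 \<le> (\<Sum>j<m. Y j * g j)"
      "\<forall>j<m. \<bar>Y j\<bar> \<le> separator_bound m (2 * \<Delta>)"
    using \<Delta> by force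
  then show ?thesis
  proof cases
    case 2
    have "0 < \<tau>" using False by simp
    from no_integral_separator[OF m \<Delta> \<tau>_def this 2(2,1)] show ?thesis ..
  qed (rule exchanges_with_cone)
qed

end

theorem lemma13:
  fixes E :: "'a set" and indep :: "'a set \<Rightarrow> bool"
    and m :: nat and \<Delta> :: int and W :: "'a \<Rightarrow> nat \<Rightarrow> int"
    and A B :: "'a set" and k :: nat
  assumes "matroid E indep"
    and "m > 0" and "\<Delta> > 0"
    and "\<forall>e\<in>E. \<forall>j<m. - \<Delta> \<le> W e j \<and> W e j \<le> \<Delta>"
    and "indep A" and "indep B" and "A \<inter> B = {}"
    and "card A = k" and "card B = k"
  shows "\<exists>(l::nat) (As :: nat \<Rightarrow> 'a set) (Bs :: nat \<Rightarrow> 'a set) (\<delta> :: nat \<Rightarrow> nat \<Rightarrow> int).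
           (\<forall>i\<le>l.
              As i \<subseteq> A \<and> Bs i \<subseteq> B \<and>
              unicolor m W (As i) \<and> unicolor m W (Bs i) \<and>
              indep ((A - As i) \<union> Bs i) \<and>
              card (As i) = card (Bs i) \<and>
              real (card (As i)) \<ge> real k / (2 * real m * real_of_int \<Delta>) ^ (10 * m)
                                     - real_of_int (l1norm m (\<lambda>j. wsum W A j - wsum W B j)) \<and>
              (\<forall>a\<in>As i. \<forall>b\<in>Bs i. \<forall>j<m. \<delta> i j = W a j - W b j)) \<and>
           in_cone m (\<lambda>j. - \<delta> 0 j) {1..l} \<delta>"
proof -
  interpret matroid_exchange E indep m \<Delta> W A B k
    using assms by unfold_locales auto
  from exists_unicolor_exchanges_with_cone[OF assms(2,3) refl]
  show ?thesis by (simp only: unicolor_exchange_def conj_assoc)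
qed

end
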